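(* Consider a stochastic $K$-armed bandit ($K\ge2$) with reward distributions supported on $[0,1]$ and means $\mu_1\ge\cdots\ge\mu_K$, run with KL-MS for $T$ rounds. Let $a$ be a suboptimal arm and $\varepsilon_2\in(0,\Delta_a)$. Let $m\le n$ with $m,n\in\mathbb N\cup\{\infty\}$. Then \[ \mathbb E\Big[\sum_{t=K+1}^T\mathbf 1\big\{I_t=a,\ \hat\mu_{t-1,\max}<\mu_1-\varepsilon_2,\ m<N_{t-1,1}\le n\big\}\Big]\le\sum_{k=m+1}^n\Big(\frac{2H}{k}+1\Big)\exp\big(-k\,\mathsf{kl}(\mu_1-\varepsilon_2,\mu_1)\big), \] where $H=\dfrac{1}{(\mu_1-\varepsilon_2)(1-\mu_1+\varepsilon_2)\,h(\mu_1,\varepsilon_2)^2}$ and $h(\mu_1,\varepsilon_2)=\ln\dfrac{(1-\mu_1+\varepsilon_2)\mu_1}{(1-\mu_1)(\mu_1-\varepsilon_2)}$.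
   Context: Bandit model: arm $i\in[K]$ has reward distribution $\nu_i$ on $[0,1]$ with mean $\mu_i$, indexed so $\mu_1\ge\cdots\ge\mu_K$. At round $t$ the learner picks $I_t$ and observes $y_t\sim\nu_{I_t}$ independently of the past given $I_t$. $N_{t,a}$ = number of pulls of arm $a$ in rounds $1..t$; $\hat\mu_{t,a}$ = empirical mean of arm $a$'s rewards up to round $t$; $\hat\mu_{t,\max}=\max_a\hat\mu_{t,a}$; $\Delta_a=\mu_1-\mu_a$. $\mathsf{kl}(p,q)=p\ln\frac pq+(1-p)\ln\frac{1-p}{1-q}$. KL-MS: for $t\le K$ pull arm $t$; for $t\ge K+1$ pull $I_t\sim p_t$ with $p_{t,a}\propto\exp(-N_{t-1,a}\,\mathsf{kl}(\hat\mu_{t-1,a},\hat\mu_{t-1,\max}))$. *)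

theory Defs
  imports "HOL-Probability.Probability"
begin

definition kl :: "real \<Rightarrow> real \<Rightarrow> ereal" where
  "kl p q = (if (0 < p \<and> q \<le> 0) \<or> (p < 1 \<and> 1 \<le> q) then \<infinity>
     else ereal ((if p = 0 then 0 else p * ln (p / q))
               + (if p = 1 then 0 else (1 - p) * ln ((1 - p) / (1 - q)))))"

definition exp_neg :: "real \<Rightarrow> ereal \<Rightarrow> real" where
  "exp_neg c d = (if d = \<infinity> then 0 else exp (- c * real_of_ereal d))"

text \<open>Learner state after some rounds: N a = number of pulls of arm a, S a = sum of its rewards.\<close>
definition emp_mean :: "(nat \<Rightarrow> nat) \<Rightarrow> (nat \<Rightarrow> real) \<Rightarrow> nat \<Rightarrow> real" where
  "emp_mean N S b = S b / real (N b)"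

definition emp_max :: "nat \<Rightarrow> (nat \<Rightarrow> nat) \<Rightarrow> (nat \<Rightarrow> real) \<Rightarrow> real" where
  "emp_max K N S = Max (emp_mean N S ` {1..K})"

definition klms_weight :: "nat \<Rightarrow> (nat \<Rightarrow> nat) \<Rightarrow> (nat \<Rightarrow> real) \<Rightarrow> nat \<Rightarrow> real" where
  "klms_weight K N S b = exp_neg (real (N b)) (kl (emp_mean N S b) (emp_max K N S))"

text \<open>Arm chosen at round t given the state after t-1 rounds and a uniform [0,1] variate u:
  arm t for t \<le> K, otherwise a sample from p_t by inverse-CDF on u.\<close>
definition klms_choose :: "nat \<Rightarrow> nat \<Rightarrow> (nat \<Rightarrow> nat) \<Rightarrow> (nat \<Rightarrow> real) \<Rightarrow> real \<Rightarrow> nat" where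
  "klms_choose K t N S u = (if t \<le> K then t else
     (let w = klms_weight K N S; tot = (\<Sum>b\<in>{1..K}. w b) in
      LEAST a. 1 \<le> a \<and> (u * tot < (\<Sum>b\<in>{1..a}. w b) \<or> a = K)))"

text \<open>Reward-table model: X (a, s) is the reward of the (s+1)-th pull of arm a,
  U t is the uniform variate used for the learner's randomisation at round t.\<close>
primrec klms_hist :: "nat \<Rightarrow> (nat \<times> nat \<Rightarrow> real) \<Rightarrow> (nat \<Rightarrow> real) \<Rightarrow> nat
    \<Rightarrow> (nat \<Rightarrow> nat) \<times> (nat \<Rightarrow> real)" where
  "klms_hist K X U 0 = (\<lambda>_. 0, \<lambda>_. 0)"
| "klms_hist K X U (Suc t) = (case klms_hist K X U t of (N, S) \<Rightarrow>
     (let a = klms_choose K (Suc t) N S (U (Suc t))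
      in (N(a := Suc (N a)), S(a := S a + X (a, N a)))))"

definition klms_arm :: "nat \<Rightarrow> (nat \<times> nat \<Rightarrow> real) \<Rightarrow> (nat \<Rightarrow> real) \<Rightarrow> nat \<Rightarrow> nat" where
  "klms_arm K X U t = (case klms_hist K X U (t - 1) of (N, S) \<Rightarrow> klms_choose K t N S (U t))"

definition bandit_space :: "nat \<Rightarrow> (nat \<Rightarrow> real measure)
    \<Rightarrow> ((nat \<times> nat \<Rightarrow> real) \<times> (nat \<Rightarrow> real)) measure" where
  "bandit_space K \<nu> =
     (\<Pi>\<^sub>M p\<in>UNIV. if fst p \<in> {1..K} then \<nu> (fst p) else return borel 0)
     \<Otimes>\<^sub>M (\<Pi>\<^sub>M t\<in>UNIV. uniform_measure lborel {0..1})"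

definition h_fun :: "real \<Rightarrow> real \<Rightarrow> real" where
  "h_fun \<mu>1 \<epsilon> = ln (((1 - \<mu>1 + \<epsilon>) * \<mu>1) / ((1 - \<mu>1) * (\<mu>1 - \<epsilon>)))"

definition H_const :: "real \<Rightarrow> real \<Rightarrow> real" where
  "H_const \<mu>1 \<epsilon> = 1 / ((\<mu>1 - \<epsilon>) * (1 - \<mu>1 + \<epsilon>) * (h_fun \<mu>1 \<epsilon>)\<^sup>2)"

end

theory Submission
  imports Defs "HOL-Real_Asymp.Real_Asymp"
begin

text \<open>
  Fix \<open>k\<close> and let \<open>x = \<mu> 1 - \<epsilon>\<^sub>2\<close>. In a round where every empirical mean is below \<open>x\<close>
  and arm 1 has empirical mean \<open>p\<close> after \<open>k\<close> pulls, KL-MS picks arm \<open>a\<close> with probability at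
  most \<open>1 / W\<close> (\<open>W\<close> the total weight) and arm 1 with probability at least
  \<open>exp (- k kl (p, x)) / W\<close>, because \<open>kl (p, \<cdot>)\<close> increases above \<open>p\<close>. Arm 1 is pulled at
  most once while its count is \<open>k\<close>, and \<open>p\<close> is then the mean \<open>Y\<close> of its first \<open>k\<close>
  rewards; hence the expected number of counted pulls of \<open>a\<close> is at most
  \<open>E [exp (k kl (Y, x)); Y < x]\<close>.

  By the layer-cake formula this expectation is \<open>P (Y < x) + \<integral>\<^sub>0\<^sup>\<infinity> e\<^sup>v P (Y < x, k kl (Y, x) > v) dv\<close>.
  The event in the integral forces \<open>Y \<le> z\<close>, where \<open>k kl (z, x) = v\<close>. By the three-point
  identity for \<open>kl\<close> and \<open>kl (z, x) \<le> (x - z)\<^sup>2 / (x (1 - x))\<close>, the Chernoff bound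
  \<open>exp (- k kl (z, \<mu> 1))\<close> for it is at most \<open>exp (- v - k kl (x, \<mu> 1) - c \<surd>v)\<close> with
  \<open>c\<^sup>2 = k / H\<close>, and \<open>\<integral>\<^sub>0\<^sup>\<infinity> exp (- c \<surd>v) dv = 2 / c\<^sup>2\<close>. Summing over \<open>k\<close> gives the theorem.
\<close>

section \<open>Bernoulli KL divergence\<close>

definition kl_real :: "real \<Rightarrow> real \<Rightarrow> real" where
  "kl_real p q = p * ln (p / q) + (1 - p) * ln ((1 - p) / (1 - q))"

lemma kl_eq_kl_real:
  assumes "0 \<le> p" "p \<le> q" "q < 1"
  shows "kl p q = ereal (kl_real p q)"
proof -
  have "\<not> ((0 < p \<and> q \<le> 0) \<or> (p < 1 \<and> 1 \<le> q))" using assms by auto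
  then show ?thesis using assms unfolding kl_def kl_real_def by simp
qed

lemma kl_real_self [simp]: "kl_real p p = 0"
  unfolding kl_real_def by simp

lemma kl_real_nonneg:
  assumes "0 \<le> p" "p \<le> 1" "0 < q" "q < 1"
  shows "0 \<le> kl_real p q"
proof -
  have "p * ln (q / p) \<le> q - p"
  proof (cases "p = 0")
    case False
    then have "p * ln (q / p) \<le> p * (q / p - 1)"
      using assms by (intro mult_left_mono ln_le_minus_one) auto
    moreover have "p * (q / p - 1) = q - p" using False by (simp add: field_simps)
    ultimately show ?thesis by linarith
  qed (use assms in simp)
  moreover have "(1 - p) * ln ((1 - q) / (1 - p)) \<le> p - q"
  proof (cases "p = 1")
    case False
    then have "(1 - p) * ln ((1 - q) / (1 - p)) \<le> (1 - p) * ((1 - q) / (1 - p) - 1)"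
      using assms by (intro mult_left_mono ln_le_minus_one) auto
    moreover have "(1 - p) * ((1 - q) / (1 - p) - 1) = p - q" using False by (simp add: field_simps)
    ultimately show ?thesis by linarith
  qed (use assms in simp)
  moreover have "ln (q / p) = - ln (p / q)" "ln ((1 - q) / (1 - p)) = - ln ((1 - p) / (1 - q))"
    by (metis inverse_divide ln_inverse)+
  ultimately show ?thesis unfolding kl_real_def by simp
qed

lemma kl_nonneg:
  assumes "0 \<le> p" "p \<le> q" "q \<le> 1"
  shows "0 \<le> kl p q"
proof (cases "q = 1")
  case False
  then have "kl p q = kl_real p q" using assms by (simp add: kl_eq_kl_real)
  moreover have "0 \<le> kl_real p q"
    using assms False kl_real_nonneg[of p q] by (cases "q = 0") auto
  ultimately show ?thesis by simp
qed (simp add: kl_def)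

lemma kl_real_le_chi_square:
  assumes "0 \<le> p" "p \<le> 1" "0 < q" "q < 1"
  shows "kl_real p q \<le> (q - p)\<^sup>2 / (q * (1 - q))"
proof -
  have "p * ln (p / q) \<le> p * (p / q - 1)"
    using assms by (cases "p = 0") (auto intro!: mult_left_mono ln_le_minus_one)
  moreover have "(1 - p) * ln ((1 - p) / (1 - q)) \<le> (1 - p) * ((1 - p) / (1 - q) - 1)"
    using assms by (cases "p = 1") (auto intro!: mult_left_mono ln_le_minus_one)
  moreover have "p * (p / q - 1) + (1 - p) * ((1 - p) / (1 - q) - 1) = (q - p)\<^sup>2 / (q * (1 - q))"
    using assms by (simp add: field_simps power2_eq_square)
  ultimately show ?thesis unfolding kl_real_def by linarith
qed

lemma kl_real_three_point:
  assumes "0 \<le> p" "p \<le> 1" "0 < q" "q < 1" "0 < r" "r < 1"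
  shows "kl_real p r = kl_real p q + kl_real q r + (q - p) * ln ((1 - q) * r / ((1 - r) * q))"
proof -
  define A where "A = ln (1 - q) - ln (1 - r)"
  define B where "B = ln q - ln r"
  have "p * ln (p / r) = p * ln (p / q) + p * B"
    using assms unfolding B_def by (cases "p = 0") (simp_all add: ln_div right_diff_distrib)
  moreover have "(1 - p) * ln ((1 - p) / (1 - r)) = (1 - p) * ln ((1 - p) / (1 - q)) + (1 - p) * A"
    using assms unfolding A_def by (cases "p = 1") (simp_all add: ln_div right_diff_distrib)
  ultimately have "kl_real p r = kl_real p q + (p * B + (1 - p) * A)"
    unfolding kl_real_def by simp
  also have "\<dots> = kl_real p q + (q * B + (1 - q) * A) + (q - p) * (A - B)"
    by (simp add: algebra_simps)
  also have "q * B + (1 - q) * A = kl_real q r"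
    using assms unfolding kl_real_def A_def B_def by (simp add: ln_div)
  also have "A - B = ln ((1 - q) * r / ((1 - r) * q))"
    using assms unfolding A_def B_def by (simp add: ln_div ln_mult)
  finally show ?thesis .
qed

lemma kl_real_three_point_le:
  assumes "0 \<le> p" "p \<le> q" "q \<le> r" "r < 1" "0 < q"
  shows "kl_real p q + kl_real q r \<le> kl_real p r"
proof -
  have "(1 - r) * q \<le> (1 - q) * r" using assms by (simp add: algebra_simps)
  then have "1 \<le> (1 - q) * r / ((1 - r) * q)" using assms by (simp add: le_divide_eq_1)
  then have "0 \<le> (q - p) * ln ((1 - q) * r / ((1 - r) * q))"
    using assms by (intro mult_nonneg_nonneg) auto
  then show ?thesis using assms by (subst kl_real_three_point[of p q r]) auto
qed

lemma kl_real_mono_right: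
  assumes "0 \<le> p" "p \<le> q" "q \<le> r" "r < 1"
  shows "kl_real p q \<le> kl_real p r"
proof (cases "q = 0")
  case True
  then have "p = 0" "q = 0" using assms by auto
  moreover have "0 \<le> kl_real 0 r" using assms kl_real_nonneg[of 0 r] by (cases "r = 0") auto
  ultimately show ?thesis by simp
next
  case False
  then show ?thesis using kl_real_three_point_le[of p q r] kl_real_nonneg[of q r] assms by auto
qed

lemma kl_real_antimono_left:
  assumes "0 \<le> p" "p \<le> q" "q \<le> r" "r < 1"
  shows "kl_real q r \<le> kl_real p r"
proof (cases "q = 0")
  case False
  then show ?thesis using kl_real_three_point_le[of p q r] kl_real_nonneg[of p q] assms by auto
qed (use assms in simp)

lemma continuous_on_mult_ln: "continuous_on {0..} (\<lambda>z::real. z * ln z)"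
  unfolding continuous_on_eq_continuous_within
proof
  fix z :: real assume "z \<in> {0..}"
  show "continuous (at z within {0..}) (\<lambda>z. z * ln z)"
  proof (cases "z = 0")
    case True
    have "((\<lambda>z::real. z * ln z) \<longlongrightarrow> 0) (at_right 0)" by real_asymp
    then show ?thesis using True by (simp add: continuous_within at_within_Ici_at_right)
  next
    case False
    then show ?thesis using \<open>z \<in> {0..}\<close>
      by (intro continuous_at_imp_continuous_at_within[where s = "{0..}"]) (auto intro!: continuous_intros)
  qed
qed

lemma continuous_on_kl_real_left:
  assumes "0 < q" "q < 1"
  shows "continuous_on {0..<1} (\<lambda>p. kl_real p q)"
proof -
  have c1: "continuous_on {0..<1} (\<lambda>p::real. p * ln p)"
    using continuous_on_mult_ln by (rule continuous_on_subset) auto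
  have c2: "continuous_on {0..<1} (\<lambda>p. (1 - p) * ln ((1 - p) / (1 - q)))"
    using assms by (intro continuous_intros) auto
  have c3: "continuous_on {0..<1} (\<lambda>p::real. p * ln q)"
    by (intro continuous_on_mult_right continuous_on_id)
  have "p * ln p - p * ln q + (1 - p) * ln ((1 - p) / (1 - q)) = kl_real p q"
    if "p \<in> {0..<1}" for p
    using that assms unfolding kl_real_def by (cases "p = 0") (simp_all add: ln_div right_diff_distrib)
  then show ?thesis
    by (rule continuous_on_cong[THEN iffD1, OF refl _ continuous_on_add[OF continuous_on_diff[OF c1 c3] c2]])
qed

lemma kl_real_level_point:
  fixes n :: real
  assumes "0 < x" "x < 1" "0 \<le> v" "v < n * kl_real 0 x"
  obtains z where "0 < z" "z \<le> x" "n * kl_real z x = v"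
proof -
  have "continuous_on {0..x} (\<lambda>y. n * kl_real y x)"
    using assms by (intro continuous_intros continuous_on_subset[OF continuous_on_kl_real_left]) auto
  then obtain z where "0 \<le> z" "z \<le> x" "n * kl_real z x = v"
    using IVT2'[of "\<lambda>y. n * kl_real y x" x v 0] assms by force
  moreover have "z \<noteq> 0" using assms(4) \<open>n * kl_real z x = v\<close> by auto
  ultimately show ?thesis using that[of z] by simp
qed

lemma kl_real_tail_exponent:
  fixes n :: real
  assumes "0 \<le> z" "z \<le> x" "0 < x" "x < \<mu>" "\<mu> < 1" "0 \<le> n"
  defines "h \<equiv> ln ((1 - x) * \<mu> / ((1 - \<mu>) * x))"
  shows "n * kl_real z x - n * kl_real z \<mu>
    \<le> - n * kl_real x \<mu> - h * sqrt (n * x * (1 - x)) * sqrt (n * kl_real z x)"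
proof -
  have "(1 - \<mu>) * x \<le> (1 - x) * \<mu>" using assms by (simp add: algebra_simps)
  then have "0 \<le> h" unfolding h_def using assms by (simp add: le_divide_eq_1)
  have "kl_real z x \<le> (x - z)\<^sup>2 / (x * (1 - x))"
    using assms by (intro kl_real_le_chi_square) auto
  then have "kl_real z x * (x * (1 - x)) \<le> (x - z)\<^sup>2"
    using assms by (simp add: le_divide_eq)
  then have "n * kl_real z x * (x * (1 - x)) \<le> n * (x - z)\<^sup>2"
    using \<open>0 \<le> n\<close> by (simp add: mult_left_mono mult.assoc)
  then have "n * (n * kl_real z x * (x * (1 - x))) \<le> n * (n * (x - z)\<^sup>2)"
    using \<open>0 \<le> n\<close> by (rule mult_left_mono)
  then have "n * x * (1 - x) * (n * kl_real z x) \<le> (n * (x - z))\<^sup>2"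
    by (simp add: power2_eq_square ac_simps)
  then have "sqrt (n * x * (1 - x)) * sqrt (n * kl_real z x) \<le> n * (x - z)"
    using assms by (metis real_sqrt_le_mono real_sqrt_mult real_sqrt_abs abs_of_nonneg mult_nonneg_nonneg diff_ge_0_iff_ge)
  then have gain: "h * (sqrt (n * x * (1 - x)) * sqrt (n * kl_real z x)) \<le> h * (n * (x - z))"
    using \<open>0 \<le> h\<close> by (rule mult_left_mono)
  have three_point: "kl_real z \<mu> = kl_real z x + kl_real x \<mu> + h * (x - z)"
    unfolding h_def using assms by (subst kl_real_three_point[of z x \<mu>]) (auto simp: algebra_simps)
  have "n * kl_real z \<mu> = n * kl_real z x + n * kl_real x \<mu> + h * (n * (x - z))"
    unfolding three_point by (simp add: algebra_simps)
  with gain show ?thesis by (simp only: mult_minus_left mult.assoc)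
qed

lemma H_const_eq: "H_const \<mu> (\<mu> - x) = 1 / (x * (1 - x) * (ln ((1 - x) * \<mu> / ((1 - \<mu>) * x)))\<^sup>2)"
  unfolding H_const_def h_fun_def by simp

section \<open>Chernoff bound for samples in the unit interval\<close>

lemma exp_le_chord:
  fixes x l :: real
  assumes "0 \<le> x" "x \<le> 1"
  shows "exp (x * l) \<le> 1 - x + x * exp l"
  using convex_onD[OF exp_convex, of x 0 l] assms by (simp add: mult.commute)

locale unit_reward = prob_space M for M :: "real measure" +
  fixes \<mu> :: real
  assumes sets_eq_borel: "sets M = sets borel"
    and AE_unit_interval: "AE x in M. x \<in> {0..1}"
    and mean_eq: "\<mu> = (\<integral>x. x \<partial>M)"
begin

lemma borel_measurable_iff: "f \<in> borel_measurable M \<longleftrightarrow> f \<in> borel_measurable borel"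
  by (simp add: measurable_cong_sets[OF sets_eq_borel refl])

lemma integrable_id: "integrable M (\<lambda>x. x)"
  using AE_unit_interval by (intro integrable_const_bound[where B = 1]) (auto simp: borel_measurable_iff)

lemma mean_nonneg: "0 \<le> \<mu>"
  unfolding mean_eq using AE_unit_interval by (intro integral_nonneg_AE) auto

lemma mean_le_1: "\<mu> \<le> 1"
proof -
  have "(\<integral>x. x \<partial>M) \<le> (\<integral>x. 1 \<partial>M)"
    using AE_unit_interval by (intro integral_mono_AE integrable_id) auto
  then show ?thesis unfolding mean_eq by (simp add: prob_space)
qed

lemma nn_integral_exp_le: "(\<integral>\<^sup>+x. exp (- l * x) \<partial>M) \<le> ennreal (1 - \<mu> + \<mu> * exp (- l))"
proof -
  have "(\<integral>\<^sup>+x. exp (- l * x) \<partial>M) \<le> (\<integral>\<^sup>+x. 1 - x + x * exp (- l) \<partial>M)"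
    using AE_unit_interval
  proof (intro nn_integral_mono_AE, eventually_elim)
    case (elim x)
    then show ?case using exp_le_chord[of x "- l"] by (intro ennreal_leI) (simp add: mult.commute)
  qed
  also have "\<dots> = ennreal (\<integral>x. 1 - x + x * exp (- l) \<partial>M)"
    using AE_unit_interval integrable_id
    by (intro nn_integral_eq_integral) (auto elim!: AE_mp intro!: add_nonneg_nonneg)
  also have "(\<integral>x. 1 - x + x * exp (- l) \<partial>M) = 1 - \<mu> + \<mu> * exp (- l)"
    using integrable_id by (simp add: mean_eq prob_space)
  finally show ?thesis .
qed

definition samples :: "nat \<Rightarrow> (nat \<Rightarrow> real) measure" where
  "samples k = PiM {..<k} (\<lambda>_. M)"

lemma prob_space_samples: "prob_space (samples k)"
  unfolding samples_def by (intro prob_space_PiM prob_space_axioms)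

lemma samples_component_measurable [measurable]:
  "s \<in> {..<k} \<Longrightarrow> (\<lambda>\<omega>. \<omega> s) \<in> borel_measurable (samples k)"
  using measurable_component_singleton[of s "{..<k}" "\<lambda>_. M"]
  by (simp add: samples_def measurable_cong_sets[OF refl sets_eq_borel])

lemma samples_sum_measurable [measurable]: "(\<lambda>\<omega>. \<Sum>s<k. \<omega> s) \<in> borel_measurable (samples k)"
  by measurable

lemma nn_integral_exp_sum_le:
  "(\<integral>\<^sup>+\<omega>. exp (- l * (\<Sum>s<k. \<omega> s)) \<partial>samples k) \<le> ennreal ((1 - \<mu> + \<mu> * exp (- l)) ^ k)"
proof -
  interpret product_sigma_finite "\<lambda>_. M"
    by (simp add: product_sigma_finite_def sigma_finite_measure_axioms)
  have "(\<integral>\<^sup>+\<omega>. exp (- l * (\<Sum>s<k. \<omega> s)) \<partial>samples k)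
      = (\<integral>\<^sup>+\<omega>. (\<Prod>s<k. ennreal (exp (- l * \<omega> s))) \<partial>samples k)"
    by (simp add: sum_distrib_left exp_sum prod_ennreal)
  also have "\<dots> = (\<Prod>s<k. \<integral>\<^sup>+x. exp (- l * x) \<partial>M)"
    unfolding samples_def by (rule product_nn_integral_prod) (auto simp: borel_measurable_iff)
  also have "\<dots> \<le> (\<Prod>s<k. ennreal (1 - \<mu> + \<mu> * exp (- l)))"
    by (intro prod_mono_ennreal nn_integral_exp_le)
  also have "\<dots> = ennreal ((1 - \<mu> + \<mu> * exp (- l)) ^ k)"
    using mean_nonneg mean_le_1 by (subst prod_ennreal) auto
  finally show ?thesis .
qed

lemma emeasure_sum_le_exp:
  assumes "0 \<le> l"
  shows "emeasure (samples k) {\<omega> \<in> space (samples k). (\<Sum>s<k. \<omega> s) \<le> k * z}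
     \<le> ennreal (exp (l * k * z) * (1 - \<mu> + \<mu> * exp (- l)) ^ k)"
proof -
  let ?A = "{\<omega> \<in> space (samples k). (\<Sum>s<k. \<omega> s) \<le> k * z}"
  have "indicator ?A \<omega> \<le> ennreal (exp (l * k * z)) * exp (- l * (\<Sum>s<k. \<omega> s))" for \<omega>
  proof (cases "\<omega> \<in> ?A")
    case True
    then have "l * (\<Sum>s<k. \<omega> s) \<le> l * (k * z)" using assms by (intro mult_left_mono) auto
    then have "1 \<le> exp (l * k * z) * exp (- l * (\<Sum>s<k. \<omega> s))"
      by (simp add: exp_add[symmetric] mult.assoc)
    then show ?thesis using True by (simp add: ennreal_mult''[symmetric])
  qed simp
  then have "(\<integral>\<^sup>+\<omega>. indicator ?A \<omega> \<partial>samples k)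
      \<le> (\<integral>\<^sup>+\<omega>. ennreal (exp (l * k * z)) * exp (- l * (\<Sum>s<k. \<omega> s)) \<partial>samples k)"
    by (intro nn_integral_mono)
  then have "emeasure (samples k) ?A
      \<le> (\<integral>\<^sup>+\<omega>. ennreal (exp (l * k * z)) * exp (- l * (\<Sum>s<k. \<omega> s)) \<partial>samples k)"
    by (subst (asm) nn_integral_indicator) measurable
  also have "\<dots> = exp (l * k * z) * (\<integral>\<^sup>+\<omega>. exp (- l * (\<Sum>s<k. \<omega> s)) \<partial>samples k)"
    by (rule nn_integral_cmult) measurable
  also have "\<dots> \<le> exp (l * k * z) * ennreal ((1 - \<mu> + \<mu> * exp (- l)) ^ k)"
    by (intro mult_left_mono nn_integral_exp_sum_le) auto
  also have "\<dots> = ennreal (exp (l * k * z) * (1 - \<mu> + \<mu> * exp (- l)) ^ k)"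
    using mean_nonneg mean_le_1 by (simp add: ennreal_mult[symmetric])
  finally show ?thesis .
qed

lemma emeasure_sum_le_kl:
  assumes "\<mu> < 1" "0 < z" "z \<le> \<mu>"
  shows "emeasure (samples k) {\<omega> \<in> space (samples k). (\<Sum>s<k. \<omega> s) \<le> k * z}
     \<le> ennreal (exp (- real k * kl_real z \<mu>))"
proof -
  \<comment> \<open>The optimal Chernoff parameter.\<close>
  define l where "l = ln (\<mu> * (1 - z) / (z * (1 - \<mu>)))"
  have "1 \<le> \<mu> * (1 - z) / (z * (1 - \<mu>))"
    using assms by (subst le_divide_eq_1) (auto intro!: mult_pos_pos simp: algebra_simps)
  then have "0 \<le> l" unfolding l_def by simp
  have "exp (- l) = z * (1 - \<mu>) / (\<mu> * (1 - z))"
    using assms unfolding l_def by (simp add: exp_minus ln_div ln_mult exp_diff exp_add)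
  then have base: "1 - \<mu> + \<mu> * exp (- l) = (1 - \<mu>) / (1 - z)"
    using assms by (simp add: field_simps)
  have l_eq: "l = ln \<mu> + ln (1 - z) - ln z - ln (1 - \<mu>)"
    using assms unfolding l_def by (simp add: ln_div ln_mult)
  have exponent: "l * z + ln ((1 - \<mu>) / (1 - z)) = - kl_real z \<mu>"
    using assms unfolding l_eq kl_real_def by (simp add: ln_div algebra_simps)
  have "exp (l * k * z) * (1 - \<mu> + \<mu> * exp (- l)) ^ k
      = exp (l * k * z) * exp (k * ln ((1 - \<mu>) / (1 - z)))"
    using assms unfolding base by (simp add: exp_of_nat_mult)
  also have "\<dots> = exp (k * (l * z + ln ((1 - \<mu>) / (1 - z))))"
    by (simp add: exp_add[symmetric] algebra_simps)
  finally have "exp (l * k * z) * (1 - \<mu> + \<mu> * exp (- l)) ^ k = exp (- real k * kl_real z \<mu>)"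
    unfolding exponent by simp
  with emeasure_sum_le_exp[OF \<open>0 \<le> l\<close>, of k z] show ?thesis by simp
qed

lemma AE_samples_sum_eq_if_mean_1:
  assumes "\<mu> = 1"
  shows "AE \<omega> in samples k. (\<Sum>s<k. \<omega> s) = k"
proof -
  have "(\<integral>x. 1 - x \<partial>M) = 0"
    using integrable_id assms by (simp add: mean_eq prob_space)
  then have "AE x in M. 1 - x = 0"
    using AE_unit_interval integrable_id
    by (subst integral_nonneg_eq_0_iff_AE[symmetric]) (auto elim!: AE_mp)
  then have "AE \<omega> in samples k. \<omega> s = 1" if "s < k" for s
    unfolding samples_def using that by (intro AE_PiM_component prob_space_axioms) auto
  then have "AE \<omega> in samples k. \<forall>s\<in>{..<k}. \<omega> s = 1"
    by (intro AE_finite_allI) auto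
  then show ?thesis by eventually_elim simp
qed

end

section \<open>An exponential moment of the KL deviation\<close>

lemma nn_integral_indicator_exp:
  assumes "0 \<le> G"
  shows "(\<integral>\<^sup>+v. indicator {0..<G} v * ennreal (exp v) \<partial>lborel) = exp G - 1"
proof -
  have "(\<integral>\<^sup>+v. indicator {0..<G} v * ennreal (exp v) \<partial>lborel) = (\<integral>\<^sup>+v. ennreal (exp v) * indicator {0..G} v \<partial>lborel)"
    using AE_lborel_singleton[of G] by (intro nn_integral_cong_AE) (auto simp: indicator_def)
  also have "\<dots> = ennreal (exp G - exp 0)"
    using assms by (intro nn_integral_FTC_Icc) (auto intro!: DERIV_exp)
  finally show ?thesis by simp
qed

lemma nn_integral_exp_layer_cake:
  assumes "sigma_finite_measure M" and [measurable]: "A \<in> sets M" "g \<in> borel_measurable M"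
    and nonneg: "\<And>\<omega>. \<omega> \<in> A \<Longrightarrow> 0 \<le> g \<omega>"
  shows "(\<integral>\<^sup>+\<omega>. indicator A \<omega> * ennreal (exp (g \<omega>)) \<partial>M)
    = emeasure M A + (\<integral>\<^sup>+v. indicator {0..} v * ennreal (exp v) * emeasure M {\<omega> \<in> A. v < g \<omega>} \<partial>lborel)"
proof -
  interpret pair_sigma_finite M lborel
    using assms(1) by (simp add: pair_sigma_finite_def lborel.sigma_finite_measure_axioms)
  define F where "F \<omega> v = (if \<omega> \<in> A \<and> 0 \<le> v \<and> v < g \<omega> then ennreal (exp v) else 0)" for \<omega> v
  have [measurable]: "(\<lambda>(\<omega>, v). F \<omega> v) \<in> borel_measurable (M \<Otimes>\<^sub>M lborel)"
    unfolding F_def by measurable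
  have inner: "(\<integral>\<^sup>+\<omega>. F \<omega> v \<partial>M) = indicator {0..} v * ennreal (exp v) * emeasure M {\<omega> \<in> A. v < g \<omega>}" for v
  proof -
    have "(\<integral>\<^sup>+\<omega>. F \<omega> v \<partial>M) = (\<integral>\<^sup>+\<omega>. (indicator {0..} v * ennreal (exp v)) * indicator {\<omega> \<in> A. v < g \<omega>} \<omega> \<partial>M)"
      unfolding F_def by (intro nn_integral_cong) (auto simp: indicator_def)
    also have "\<dots> = indicator {0..} v * ennreal (exp v) * emeasure M {\<omega> \<in> A. v < g \<omega>}"
      by (rule nn_integral_cmult_indicator) measurable
    finally show ?thesis .
  qed
  have "indicator A \<omega> * ennreal (exp (g \<omega>)) = indicator A \<omega> + (\<integral>\<^sup>+v. F \<omega> v \<partial>lborel)" for \<omega>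
  proof (cases "\<omega> \<in> A")
    case True
    have "(\<integral>\<^sup>+v. F \<omega> v \<partial>lborel) = (\<integral>\<^sup>+v. indicator {0..<g \<omega>} v * ennreal (exp v) \<partial>lborel)"
      using True unfolding F_def by (intro nn_integral_cong) (simp add: indicator_def)
    also have "\<dots> = ennreal (exp (g \<omega>) - 1)"
      using True nonneg by (simp add: nn_integral_indicator_exp)
    finally have "(\<integral>\<^sup>+v. F \<omega> v \<partial>lborel) = ennreal (exp (g \<omega>) - 1)" .
    moreover have "ennreal (exp (g \<omega>)) = ennreal 1 + ennreal (exp (g \<omega>) - 1)"
      using True nonneg by (subst ennreal_plus[symmetric]) auto
    ultimately show ?thesis using True by simp
  qed (simp add: F_def)
  then have "(\<integral>\<^sup>+\<omega>. indicator A \<omega> * ennreal (exp (g \<omega>)) \<partial>M)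
      = emeasure M A + (\<integral>\<^sup>+\<omega>. (\<integral>\<^sup>+v. F \<omega> v \<partial>lborel) \<partial>M)"
    by (simp add: nn_integral_add lborel.borel_measurable_nn_integral)
  also have "(\<integral>\<^sup>+\<omega>. (\<integral>\<^sup>+v. F \<omega> v \<partial>lborel) \<partial>M) = (\<integral>\<^sup>+v. (\<integral>\<^sup>+\<omega>. F \<omega> v \<partial>M) \<partial>lborel)"
    by (rule Fubini'[symmetric]) measurable
  finally show ?thesis by (simp add: inner)
qed

lemma has_real_derivative_exp_neg_sqrt:
  fixes c v :: real
  assumes "c \<noteq> 0" "0 < v"
  shows "((\<lambda>v. - (2 / c\<^sup>2) * (1 + c * sqrt v) * exp (- c * sqrt v)) has_real_derivative exp (- c * sqrt v)) (at v)"
proof -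
  define \<phi> where "\<phi> = (\<lambda>s. - (2 / c\<^sup>2) * (1 + c * s) * exp (- c * s))"
  have "(\<phi> has_real_derivative 2 * sqrt v * exp (- c * sqrt v)) (at (sqrt v))"
    unfolding \<phi>_def using assms
    by (auto intro!: derivative_eq_intros simp: field_simps power2_eq_square)
  from DERIV_chain[OF this DERIV_real_sqrt[OF assms(2)]]
  have "(\<phi> \<circ> sqrt has_real_derivative 2 * sqrt v * exp (- c * sqrt v) * (inverse (sqrt v) / 2)) (at v)" .
  moreover have "2 * sqrt v * exp (- c * sqrt v) * (inverse (sqrt v) / 2) = exp (- c * sqrt v)"
    using assms by (simp add: field_simps)
  moreover have "\<phi> \<circ> sqrt = (\<lambda>v. - (2 / c\<^sup>2) * (1 + c * sqrt v) * exp (- c * sqrt v))"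
    by (simp add: fun_eq_iff \<phi>_def)
  ultimately show ?thesis by (simp only:)
qed

lemma nn_integral_exp_neg_sqrt_le:
  fixes c :: real
  assumes "0 < c"
  shows "(\<integral>\<^sup>+v. indicator {0..} v * ennreal (exp (- c * sqrt v)) \<partial>lborel) \<le> 2 / c\<^sup>2"
proof -
  define F where "F = (\<lambda>v. - (2 / c\<^sup>2) * (1 + c * sqrt v) * exp (- c * sqrt v))"
  have F_deriv: "(F has_real_derivative exp (- c * sqrt v)) (at v)" if "0 < v" for v
    unfolding F_def using assms that by (intro has_real_derivative_exp_neg_sqrt) auto
  define f where "f n v = ennreal (indicator {0..real n} v * exp (- c * sqrt v))" for n :: nat and v
  have "(\<integral>\<^sup>+v. f n v \<partial>lborel) = ennreal (F (real n) - F 0)" for n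
  proof -
    have "((\<lambda>v. exp (- c * sqrt v)) has_integral F (real n) - F 0) {0..real n}"
    proof (rule fundamental_theorem_of_calculus_interior)
      show "continuous_on {0..real n} F" unfolding F_def by (intro continuous_intros)
      show "(F has_vector_derivative exp (- c * sqrt v)) (at v)" if "v \<in> {0<..<real n}" for v
        using F_deriv[of v] that by (simp add: has_real_derivative_iff_has_vector_derivative)
    qed simp
    then show ?thesis unfolding f_def by (intro nn_integral_has_integral_lebesgue) auto
  qed
  moreover have "F (real n) - F 0 \<le> 2 / c\<^sup>2" for n
    unfolding F_def using assms by (simp add: mult_nonneg_nonneg)
  ultimately have bound: "(\<integral>\<^sup>+v. f n v \<partial>lborel) \<le> 2 / c\<^sup>2" for n
    by (simp add: ennreal_leI)
  have "indicator {0..} v * ennreal (exp (- c * sqrt v)) \<le> (SUP n. f n v)" for v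
  proof (cases "0 \<le> v")
    case True
    then have "f (nat \<lceil>v\<rceil>) v = exp (- c * sqrt v)" by (simp add: f_def indicator_def)
    then show ?thesis using True by (metis SUP_upper UNIV_I indicator_simps(1) atLeast_iff mult_1)
  qed simp
  then have "(\<integral>\<^sup>+v. indicator {0..} v * ennreal (exp (- c * sqrt v)) \<partial>lborel) \<le> (\<integral>\<^sup>+v. (SUP n. f n v) \<partial>lborel)"
    by (intro nn_integral_mono)
  also have "\<dots> = (SUP n. \<integral>\<^sup>+v. f n v \<partial>lborel)"
    by (rule nn_integral_monotone_convergence_SUP)
      (auto simp: f_def incseq_def le_fun_def indicator_def intro!: ennreal_leI)
  also have "\<dots> \<le> 2 / c\<^sup>2"
    by (rule SUP_least) (rule bound)
  finally show ?thesis .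
qed

definition sample_mean :: "nat \<Rightarrow> (nat \<Rightarrow> real) \<Rightarrow> real" where
  "sample_mean k \<omega> = (\<Sum>s<k. \<omega> s) / real k"

definition exp_kl_below :: "nat \<Rightarrow> real \<Rightarrow> (nat \<Rightarrow> real) \<Rightarrow> ennreal" where
  "exp_kl_below k x \<omega> =
     indicator {0..<x} (sample_mean k \<omega>) * ennreal (exp (k * kl_real (sample_mean k \<omega>) x))"

context unit_reward
begin

lemma sample_mean_measurable [measurable]: "sample_mean k \<in> borel_measurable (samples k)"
  unfolding sample_mean_def by measurable

lemma emeasure_sample_mean_less_le:
  assumes "0 < x" "x \<le> \<mu>" "\<mu> < 1" "0 < k"
  shows "emeasure (samples k) {\<omega> \<in> space (samples k). sample_mean k \<omega> \<in> {0..<x}}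
    \<le> exp (- real k * kl_real x \<mu>)"
proof -
  have "emeasure (samples k) {\<omega> \<in> space (samples k). sample_mean k \<omega> \<in> {0..<x}}
      \<le> emeasure (samples k) {\<omega> \<in> space (samples k). (\<Sum>s<k. \<omega> s) \<le> k * x}"
    using assms by (intro emeasure_mono) (auto simp: sample_mean_def divide_less_eq mult.commute)
  also have "\<dots> \<le> exp (- real k * kl_real x \<mu>)"
    using assms by (intro emeasure_sum_le_kl) auto
  finally show ?thesis .
qed

lemma emeasure_kl_tail_le:
  assumes "0 < x" "x < \<mu>" "\<mu> < 1" "0 < k" "0 \<le> v"
  defines "h \<equiv> ln ((1 - x) * \<mu> / ((1 - \<mu>) * x))"
  shows "ennreal (exp v) * emeasure (samples k) {\<omega> \<in> space (samples k).
           sample_mean k \<omega> \<in> {0..<x} \<and> v < k * kl_real (sample_mean k \<omega>) x}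
     \<le> ennreal (exp (- real k * kl_real x \<mu>) * exp (- h * sqrt (k * x * (1 - x)) * sqrt v))"
proof -
  let ?S = "{\<omega> \<in> space (samples k). sample_mean k \<omega> \<in> {0..<x} \<and> v < k * kl_real (sample_mean k \<omega>) x}"
  have antimono: "k * kl_real q x \<le> k * kl_real p x" if "0 \<le> p" "p \<le> q" "q < x" for p q
    using that assms by (intro mult_left_mono kl_real_antimono_left) auto
  show ?thesis
  proof (cases "k * kl_real 0 x \<le> v")
    case True
    have S_empty: "?S = {}" using antimono[of 0] True by force
    show ?thesis unfolding S_empty by simp
  next
    case False
    then obtain z where z: "0 < z" "z \<le> x" "k * kl_real z x = v"
      using kl_real_level_point[of x v k] assms by auto
    have "?S \<subseteq> {\<omega> \<in> space (samples k). (\<Sum>s<k. \<omega> s) \<le> k * z}"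
    proof safe
      fix \<omega> assume "sample_mean k \<omega> \<in> {0..<x}" "v < k * kl_real (sample_mean k \<omega>) x"
      then have "sample_mean k \<omega> \<le> z" using antimono[of z "sample_mean k \<omega>"] z by force
      then show "(\<Sum>s<k. \<omega> s) \<le> k * z"
        using assms by (simp add: sample_mean_def divide_le_eq mult.commute)
    qed
    then have "emeasure (samples k) ?S \<le> emeasure (samples k) {\<omega> \<in> space (samples k). (\<Sum>s<k. \<omega> s) \<le> k * z}"
      by (intro emeasure_mono) measurable
    also have "\<dots> \<le> exp (- real k * kl_real z \<mu>)"
      using z assms by (intro emeasure_sum_le_kl) auto
    finally have "ennreal (exp v) * emeasure (samples k) ?S \<le> ennreal (exp v) * exp (- real k * kl_real z \<mu>)"
      by (intro mult_left_mono) auto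
    also have "\<dots> = ennreal (exp (k * kl_real z x - k * kl_real z \<mu>))"
      using z by (subst ennreal_mult[symmetric]) (simp_all flip: exp_add)
    also have "k * kl_real z x - k * kl_real z \<mu> \<le> - real k * kl_real x \<mu> - h * sqrt (k * x * (1 - x)) * sqrt v"
      using kl_real_tail_exponent[of z x \<mu> k] z assms unfolding h_def by auto
    finally show ?thesis by (simp add: exp_diff exp_minus field_simps)
  qed
qed

lemma nn_integral_exp_kl_below_le_explicit:
  assumes "0 < x" "x < \<mu>" "\<mu> < 1" "0 < k"
  defines "c \<equiv> ln ((1 - x) * \<mu> / ((1 - \<mu>) * x)) * sqrt (k * x * (1 - x))"
  shows "(\<integral>\<^sup>+\<omega>. exp_kl_below k x \<omega> \<partial>samples k) \<le> ennreal ((2 / c\<^sup>2 + 1) * exp (- real k * kl_real x \<mu>))"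
proof -
  interpret samples: prob_space "samples k" by (rule prob_space_samples)
  define B where "B = exp (- real k * kl_real x \<mu>)"
  define A where "A = {\<omega> \<in> space (samples k). sample_mean k \<omega> \<in> {0..<x}}"
  have [measurable]: "A \<in> sets (samples k)" unfolding A_def by measurable
  have [measurable]: "(\<lambda>\<omega>. k * kl_real (sample_mean k \<omega>) x) \<in> borel_measurable (samples k)"
    unfolding kl_real_def by measurable
  have "(1 - \<mu>) * x < (1 - x) * \<mu>" using assms by (simp add: algebra_simps)
  then have "0 < c" unfolding c_def using assms by (simp add: less_divide_eq_1)
  have A_le: "emeasure (samples k) A \<le> B"
    unfolding A_def B_def using assms by (intro emeasure_sample_mean_less_le) auto
  have tail_le: "indicator {0..} v * ennreal (exp v) * emeasure (samples k) {\<omega> \<in> A. v < k * kl_real (sample_mean k \<omega>) x}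
      \<le> B * (indicator {0..} v * ennreal (exp (- c * sqrt v)))" for v
  proof (cases "0 \<le> v")
    case True
    have "{\<omega> \<in> A. v < k * kl_real (sample_mean k \<omega>) x} = {\<omega> \<in> space (samples k).
        sample_mean k \<omega> \<in> {0..<x} \<and> v < k * kl_real (sample_mean k \<omega>) x}"
      unfolding A_def by blast
    then show ?thesis
      using emeasure_kl_tail_le[OF assms(1-4) True] True
      unfolding B_def c_def by (simp add: ennreal_mult mult.assoc)
  qed simp
  have "(\<integral>\<^sup>+\<omega>. exp_kl_below k x \<omega> \<partial>samples k)
      = (\<integral>\<^sup>+\<omega>. indicator A \<omega> * ennreal (exp (k * kl_real (sample_mean k \<omega>) x)) \<partial>samples k)"
    unfolding exp_kl_below_def A_def by (intro nn_integral_cong) (simp add: indicator_def)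
  also have "\<dots> = emeasure (samples k) A + (\<integral>\<^sup>+v. indicator {0..} v * ennreal (exp v)
      * emeasure (samples k) {\<omega> \<in> A. v < k * kl_real (sample_mean k \<omega>) x} \<partial>lborel)"
    using assms unfolding A_def
    by (intro nn_integral_exp_layer_cake samples.sigma_finite_measure_axioms)
      (auto intro!: mult_nonneg_nonneg kl_real_nonneg)
  also have "\<dots> \<le> B + (\<integral>\<^sup>+v. B * (indicator {0..} v * ennreal (exp (- c * sqrt v))) \<partial>lborel)"
    by (intro add_mono nn_integral_mono A_le tail_le)
  also have "\<dots> = B + B * (\<integral>\<^sup>+v. indicator {0..} v * ennreal (exp (- c * sqrt v)) \<partial>lborel)"
    by (subst nn_integral_cmult) auto
  also have "\<dots> \<le> ennreal B + ennreal B * ennreal (2 / c\<^sup>2)"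
    using \<open>0 < c\<close> by (intro add_left_mono mult_left_mono nn_integral_exp_neg_sqrt_le) auto
  also have "\<dots> = ennreal ((2 / c\<^sup>2 + 1) * B)"
    unfolding B_def by (simp add: ennreal_mult[symmetric] ennreal_plus[symmetric] distrib_right del: ennreal_plus)
  finally show ?thesis unfolding B_def .
qed

lemma nn_integral_exp_kl_below_le:
  assumes "0 < x" "x < \<mu>" "0 < k"
  shows "(\<integral>\<^sup>+\<omega>. exp_kl_below k x \<omega> \<partial>samples k)
    \<le> (2 * H_const \<mu> (\<mu> - x) / k + 1) * exp_neg k (kl x \<mu>)"
proof (cases "\<mu> = 1")
  case True
  have "AE \<omega> in samples k. exp_kl_below k x \<omega> = 0"
    using AE_samples_sum_eq_if_mean_1[OF True, of k]
    by eventually_elim (use assms True in \<open>simp add: exp_kl_below_def sample_mean_def\<close>)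
  then have "(\<integral>\<^sup>+\<omega>. exp_kl_below k x \<omega> \<partial>samples k) = 0"
    using nn_integral_cong_AE by fastforce
  then show ?thesis by simp
next
  case False
  then have "\<mu> < 1" using mean_le_1 by simp
  define h where "h = ln ((1 - x) * \<mu> / ((1 - \<mu>) * x))"
  have "2 / (h * sqrt (k * x * (1 - x)))\<^sup>2 = 2 * H_const \<mu> (\<mu> - x) / k"
    using assms \<open>\<mu> < 1\<close> by (simp add: H_const_eq h_def power_mult_distrib field_simps)
  moreover have "exp (- real k * kl_real x \<mu>) = exp_neg k (kl x \<mu>)"
    using assms \<open>\<mu> < 1\<close> by (simp add: exp_neg_def kl_eq_kl_real)
  ultimately show ?thesis
    using nn_integral_exp_kl_below_le_explicit[OF assms(1,2) \<open>\<mu> < 1\<close> assms(3)] by (simp add: h_def)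
qed

end

section \<open>The KL-MS dynamics\<close>

lemma klms_hist_cong:
  assumes "\<And>s. 1 \<le> s \<Longrightarrow> s \<le> t \<Longrightarrow> U s = U' s"
  shows "klms_hist K X U t = klms_hist K X U' t"
  using assms by (induction t) (auto simp: Let_def split: prod.splits)

lemma snd_klms_hist: "snd (klms_hist K X U t) b = (\<Sum>j<fst (klms_hist K X U t) b. X (b, j))"
  by (induction t) (auto simp: Let_def split: prod.splits)

lemma klms_arm_0: "klms_arm K X U 0 = 0"
  by (simp add: klms_arm_def klms_choose_def split: prod.splits)

lemma klms_arm_Suc:
  "klms_arm K X U (Suc t) =
     klms_choose K (Suc t) (fst (klms_hist K X U t)) (snd (klms_hist K X U t)) (U (Suc t))"
  by (simp add: klms_arm_def split: prod.splits)

lemma fst_klms_hist_Suc: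
  "fst (klms_hist K X U (Suc t)) b = fst (klms_hist K X U t) b + of_bool (klms_arm K X U (Suc t) = b)"
  unfolding klms_arm_Suc by (simp add: Let_def split: prod.splits)

lemma fst_klms_hist_mono: "t \<le> t' \<Longrightarrow> fst (klms_hist K X U t) b \<le> fst (klms_hist K X U t') b"
proof (induction t' rule: dec_induct)
  case (step t')
  then show ?case using fst_klms_hist_Suc[of K X U t' b] by linarith
qed simp

lemma sum_pulls_at_count_le_1:
  assumes "finite A" "0 < b"
  shows "(\<Sum>t\<in>A. of_bool (klms_arm K X U t = b \<and> fst (klms_hist K X U (t - 1)) b = k) :: ennreal) \<le> 1"
proof -
  define P where "P t \<longleftrightarrow> klms_arm K X U t = b \<and> fst (klms_hist K X U (t - 1)) b = k" for t
  \<comment> \<open>After a pull of arm \<open>b\<close> at count \<open>k\<close>, the count of \<open>b\<close> stays above \<open>k\<close>.\<close>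
  have "\<not> P t'" if "P t" "t < t'" for t t'
  proof -
    have "0 < t" using \<open>P t\<close> \<open>0 < b\<close> klms_arm_0[of K X U] unfolding P_def by (cases t) auto
    then have "fst (klms_hist K X U t) b = Suc k"
      using \<open>P t\<close> fst_klms_hist_Suc[of K X U "t - 1" b] unfolding P_def by simp
    moreover have "fst (klms_hist K X U t) b \<le> fst (klms_hist K X U (t' - 1)) b"
      using \<open>t < t'\<close> by (intro fst_klms_hist_mono) simp
    ultimately show ?thesis unfolding P_def by simp
  qed
  then have "card {t \<in> A. P t} \<le> Suc 0"
    using assms(1) by (subst card_le_Suc0_iff_eq) (auto, metis linorder_neqE_nat)
  then show ?thesis
    using assms(1) unfolding P_def by (simp add: Int_def)
qed

abbreviation unif01 :: "real measure" where
  "unif01 \<equiv> uniform_measure lborel {0..1}"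

lemma emeasure_unif01: "B \<in> sets borel \<Longrightarrow> emeasure unif01 B = emeasure lborel ({0..1} \<inter> B)"
  by (subst emeasure_uniform_measure) (auto simp: divide_ennreal_def)

definition inverse_cdf :: "nat \<Rightarrow> (nat \<Rightarrow> real) \<Rightarrow> real \<Rightarrow> nat" where
  "inverse_cdf K w u = (LEAST j. 1 \<le> j \<and> (u * (\<Sum>b\<in>{1..K}. w b) < (\<Sum>b\<in>{1..j}. w b) \<or> j = K))"

lemma klms_choose_eq_inverse_cdf:
  "K < t \<Longrightarrow> klms_choose K t N S u = inverse_cdf K (klms_weight K N S) u"
  unfolding klms_choose_def inverse_cdf_def by (simp add: Let_def)

lemma inverse_cdf_eq_1:
  assumes "1 \<le> K" "u * (\<Sum>b\<in>{1..K}. w b) < w 1"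
  shows "inverse_cdf K w u = 1"
  unfolding inverse_cdf_def using assms
  by (intro Least_equality) auto

lemma inverse_cdf_eqD:
  assumes "2 \<le> a" "inverse_cdf K w u = a" "0 < (\<Sum>b\<in>{1..K}. w b)"
  shows "u \<in> {(\<Sum>b\<in>{1..a - 1}. w b) / (\<Sum>b\<in>{1..K}. w b) .. (\<Sum>b\<in>{1..a}. w b) / (\<Sum>b\<in>{1..K}. w b)} \<union> {1..}"
proof -
  define W where "W = (\<Sum>b\<in>{1..K}. w b)"
  let ?P = "\<lambda>j. 1 \<le> j \<and> (u * W < (\<Sum>b\<in>{1..j}. w b) \<or> j = K)"
  have "0 < W" "1 \<le> K" using assms(3) unfolding W_def by (auto intro: ccontr)
  then have "?P a" using LeastI[of ?P K] assms(2) unfolding inverse_cdf_def W_def by auto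
  moreover have "\<not> ?P (a - 1)"
    using not_less_Least[of "a - 1" ?P] assms(1,2) unfolding inverse_cdf_def W_def by auto
  ultimately have lower: "(\<Sum>b\<in>{1..a - 1}. w b) \<le> u * W"
    and upper: "u * W < (\<Sum>b\<in>{1..a}. w b) \<or> a = K"
    using assms(1) by auto
  show ?thesis
  proof (cases "u * W < (\<Sum>b\<in>{1..a}. w b)")
    case True
    then show ?thesis using lower \<open>0 < W\<close> unfolding W_def[symmetric] by (simp add: pos_divide_le_eq pos_le_divide_eq)
  next
    case False
    then have "W \<le> u * W" using upper unfolding W_def by auto
    then show ?thesis using \<open>0 < W\<close> by simp
  qed
qed

lemma nn_integral_inverse_cdf_eq_le:
  assumes "2 \<le> a" "a \<le> K" "\<And>b. 0 \<le> w b" "0 < (\<Sum>b\<in>{1..K}. w b)"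
  shows "(\<integral>\<^sup>+u. of_bool (inverse_cdf K w u = a) \<partial>unif01) \<le> ennreal (w a / (\<Sum>b\<in>{1..K}. w b))"
proof -
  define W where "W = (\<Sum>b\<in>{1..K}. w b)"
  define c where "c = (\<Sum>b\<in>{1..a - 1}. w b)"
  have "{1..a} = insert a {1..a - 1}" "a \<notin> {1..a - 1}" using assms by auto
  then have sum_a: "(\<Sum>b\<in>{1..a}. w b) = c + w a" unfolding c_def by (simp add: add.commute)
  define B where "B = {c / W .. (c + w a) / W} \<union> {1..}"
  have "(of_bool (inverse_cdf K w u = a) :: ennreal) \<le> indicator B u" for u
  proof (cases "inverse_cdf K w u = a")
    case True
    then show ?thesis using inverse_cdf_eqD[OF assms(1) True assms(4), folded W_def c_def, unfolded sum_a]
      by (simp add: B_def)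
  qed simp
  then have "(\<integral>\<^sup>+u. of_bool (inverse_cdf K w u = a) \<partial>unif01) \<le> (\<integral>\<^sup>+u. indicator B u \<partial>unif01)"
    by (intro nn_integral_mono)
  also have "\<dots> = emeasure unif01 B"
    by (rule nn_integral_indicator) (simp add: B_def)
  also have "\<dots> = emeasure lborel ({0..1} \<inter> B)"
    by (rule emeasure_unif01) (simp add: B_def)
  also have "\<dots> \<le> emeasure lborel {c / W .. (c + w a) / W} + emeasure lborel {1::real}"
    by (rule order_trans[OF emeasure_mono emeasure_subadditive]) (auto simp: B_def)
  also have "\<dots> = ennreal (w a / W)"
  proof -
    have "c / W \<le> (c + w a) / W" using assms by (simp add: W_def divide_right_mono)
    then show ?thesis by (simp add: diff_divide_distrib[symmetric])
  qed
  finally show ?thesis unfolding W_def .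
qed

lemma nn_integral_inverse_cdf_eq_1_ge:
  assumes "1 \<le> K" "\<And>b. 0 \<le> w b" "0 < (\<Sum>b\<in>{1..K}. w b)"
  shows "ennreal (w 1 / (\<Sum>b\<in>{1..K}. w b)) \<le> (\<integral>\<^sup>+u. of_bool (inverse_cdf K w u = 1) \<partial>unif01)"
proof -
  define W where "W = (\<Sum>b\<in>{1..K}. w b)"
  have "0 < W" "w 1 \<le> W" unfolding W_def using assms by (auto intro!: member_le_sum)
  then have "w 1 / W \<le> 1" by simp
  then have "{0..1} \<inter> {0..<w 1 / W} = {0..<w 1 / W}" by auto
  then have "ennreal (w 1 / W) = emeasure lborel ({0..1} \<inter> {0..<w 1 / W})"
    using assms \<open>0 < W\<close> by simp
  also have "\<dots> = emeasure unif01 {0..<w 1 / W}"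
    by (rule emeasure_unif01[symmetric]) simp
  also have "\<dots> = (\<integral>\<^sup>+u. indicator {0..<w 1 / W} u \<partial>unif01)"
    by (rule nn_integral_indicator[symmetric]) simp
  also have "\<dots> \<le> (\<integral>\<^sup>+u. of_bool (inverse_cdf K w u = 1) \<partial>unif01)"
  proof (intro nn_integral_mono)
    fix u
    show "indicator {0..<w 1 / W} u \<le> (of_bool (inverse_cdf K w u = 1) :: ennreal)"
    proof (cases "u \<in> {0..<w 1 / W}")
      case True
      then have "u * W < w 1" using \<open>0 < W\<close> by (simp add: less_divide_eq)
      then show ?thesis using assms True by (simp add: inverse_cdf_eq_1 W_def)
    qed simp
  qed
  finally show ?thesis unfolding W_def .
qed

lemma exp_neg_le_1: "0 \<le> c \<Longrightarrow> 0 \<le> d \<Longrightarrow> exp_neg c d \<le> 1"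
  unfolding exp_neg_def by (cases d) auto

lemma klms_weight_nonneg: "0 \<le> klms_weight K N S b"
  unfolding klms_weight_def exp_neg_def by simp

lemma emp_mean_le_emp_max: "b \<in> {1..K} \<Longrightarrow> emp_mean N S b \<le> emp_max K N S"
  unfolding emp_max_def by (intro Max_ge) auto

lemma emp_max_in_unit_interval:
  assumes "1 \<le> K" "\<And>b. b \<in> {1..K} \<Longrightarrow> emp_mean N S b \<in> {0..1}"
  shows "emp_max K N S \<in> {0..1}"
proof -
  have "emp_max K N S \<in> emp_mean N S ` {1..K}"
    unfolding emp_max_def using assms(1) by (intro Max_in) auto
  then show ?thesis using assms(2) by auto
qed

lemma exp_neg_kl_real_le_klms_weight:
  assumes "0 \<le> emp_mean N S b" "emp_mean N S b \<le> emp_max K N S" "emp_max K N S < x" "x < 1"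
  shows "exp (- real (N b) * kl_real (emp_mean N S b) x) \<le> klms_weight K N S b"
proof -
  define p where "p = emp_mean N S b"
  define m where "m = emp_max K N S"
  have "kl_real p m \<le> kl_real p x"
    using assms unfolding p_def m_def by (intro kl_real_mono_right) auto
  moreover have "klms_weight K N S b = exp (- real (N b) * kl_real p m)"
    using assms by (simp add: klms_weight_def exp_neg_def kl_eq_kl_real p_def m_def)
  ultimately show ?thesis unfolding p_def by (simp add: mult_left_mono)
qed

lemma nn_integral_klms_choose_a_le:
  fixes k :: nat and x :: real
  assumes "K < t" "a \<in> {2..K}" "\<And>b. b \<in> {1..K} \<Longrightarrow> emp_mean N S b \<in> {0..1}"
    and "x < 1" "emp_max K N S < x" "N 1 = k"
  shows "(\<integral>\<^sup>+u. of_bool (klms_choose K t N S u = a) \<partial>unif01)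
    \<le> exp (k * kl_real (emp_mean N S 1) x) * (\<integral>\<^sup>+u. of_bool (klms_choose K t N S u = 1) \<partial>unif01)"
proof -
  define w where "w = klms_weight K N S"
  define W where "W = (\<Sum>b\<in>{1..K}. w b)"
  define G where "G = exp (k * kl_real (emp_mean N S 1) x)"
  have "1 \<le> K" using assms(2) by simp
  have w_nonneg: "0 \<le> w b" for b unfolding w_def by (rule klms_weight_nonneg)
  have "emp_max K N S \<le> 1" using emp_max_in_unit_interval[OF \<open>1 \<le> K\<close> assms(3)] by simp
  then have "w a \<le> 1"
    unfolding w_def klms_weight_def using assms(2,3) emp_mean_le_emp_max[of a K N S]
    by (intro exp_neg_le_1 kl_nonneg) auto
  have "1 / G \<le> w 1"
    using exp_neg_kl_real_le_klms_weight[of N S 1 K x] assms(3)[of 1] emp_mean_le_emp_max[of 1 K N S] assms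
    by (simp add: G_def w_def exp_minus divide_inverse)
  moreover have "w 1 \<le> W" unfolding W_def using \<open>1 \<le> K\<close> w_nonneg by (intro member_le_sum) auto
  moreover have "0 < 1 / G" by (simp add: G_def)
  ultimately have "0 < W" by linarith
  have "w a / W \<le> G * (w 1 / W)"
    using \<open>w a \<le> 1\<close> \<open>1 / G \<le> w 1\<close> \<open>0 < W\<close> by (simp add: G_def divide_right_mono field_simps)
  have choose: "klms_choose K t N S = inverse_cdf K w"
    using assms(1) by (simp add: fun_eq_iff klms_choose_eq_inverse_cdf w_def)
  have "(\<integral>\<^sup>+u. of_bool (klms_choose K t N S u = a) \<partial>unif01) \<le> ennreal (w a / W)"
    unfolding choose W_def using assms(2) w_nonneg \<open>0 < W\<close>
    by (intro nn_integral_inverse_cdf_eq_le) (auto simp: W_def)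
  also have "\<dots> \<le> ennreal (G * (w 1 / W))"
    by (intro ennreal_leI) fact
  also have "\<dots> = G * ennreal (w 1 / W)"
    by (rule ennreal_mult) (use w_nonneg \<open>0 < W\<close> in \<open>auto simp: G_def\<close>)
  also have "\<dots> \<le> G * (\<integral>\<^sup>+u. of_bool (klms_choose K t N S u = 1) \<partial>unif01)"
    unfolding choose W_def using \<open>1 \<le> K\<close> w_nonneg \<open>0 < W\<close>
    by (intro mult_left_mono nn_integral_inverse_cdf_eq_1_ge) (auto simp: W_def)
  finally show ?thesis unfolding G_def .
qed

lemma exp_neg_kl:
  "exp_neg c (kl p q) =
    (if (0 < p \<and> q \<le> 0) \<or> (p < 1 \<and> 1 \<le> q) then 0
     else exp (- c * ((if p = 0 then 0 else p * ln (p / q))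
                     + (if p = 1 then 0 else (1 - p) * ln ((1 - p) / (1 - q))))))"
  unfolding exp_neg_def kl_def by simp

context
  fixes M :: "'m measure"
begin

lemma measurable_emp_max [measurable]:
  assumes [measurable]: "\<And>b. (\<lambda>\<omega>. N \<omega> b) \<in> measurable M (count_space UNIV)"
    "\<And>b. (\<lambda>\<omega>. S \<omega> b) \<in> borel_measurable M"
  shows "(\<lambda>\<omega>. emp_max K (N \<omega>) (S \<omega>)) \<in> borel_measurable M"
  unfolding emp_max_def emp_mean_def by measurable

lemma measurable_klms_weight [measurable]:
  assumes [measurable]: "\<And>b. (\<lambda>\<omega>. N \<omega> b) \<in> measurable M (count_space UNIV)"
    "\<And>b. (\<lambda>\<omega>. S \<omega> b) \<in> borel_measurable M"
  shows "(\<lambda>\<omega>. klms_weight K (N \<omega>) (S \<omega>) b) \<in> borel_measurable M"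
  unfolding klms_weight_def exp_neg_kl emp_mean_def by measurable

lemma measurable_klms_choose [measurable]:
  assumes [measurable]: "\<And>b. (\<lambda>\<omega>. N \<omega> b) \<in> measurable M (count_space UNIV)"
    "\<And>b. (\<lambda>\<omega>. S \<omega> b) \<in> borel_measurable M" "u \<in> borel_measurable M"
  shows "(\<lambda>\<omega>. klms_choose K t (N \<omega>) (S \<omega>) (u \<omega>)) \<in> measurable M (count_space UNIV)"
  unfolding klms_choose_def Let_def by measurable

lemma measurable_klms_hist:
  assumes [measurable]: "\<And>p. (\<lambda>\<omega>. X \<omega> p) \<in> borel_measurable M" "\<And>s. (\<lambda>\<omega>. U \<omega> s) \<in> borel_measurable M"
  shows "(\<lambda>\<omega>. fst (klms_hist K (X \<omega>) (U \<omega>) t) b) \<in> measurable M (count_space UNIV)"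
    and "(\<lambda>\<omega>. snd (klms_hist K (X \<omega>) (U \<omega>) t) b) \<in> borel_measurable M"
proof -
  have "(\<forall>b. (\<lambda>\<omega>. fst (klms_hist K (X \<omega>) (U \<omega>) t) b) \<in> measurable M (count_space UNIV)) \<and>
        (\<forall>b. (\<lambda>\<omega>. snd (klms_hist K (X \<omega>) (U \<omega>) t) b) \<in> borel_measurable M)"
  proof (induction t)
    case (Suc t)
    define N where "N \<omega> = fst (klms_hist K (X \<omega>) (U \<omega>) t)" for \<omega>
    define S where "S \<omega> = snd (klms_hist K (X \<omega>) (U \<omega>) t)" for \<omega>
    define a where "a \<omega> = klms_choose K (Suc t) (N \<omega>) (S \<omega>) (U \<omega> (Suc t))" for \<omega>
    have [measurable]: "(\<lambda>\<omega>. N \<omega> b) \<in> measurable M (count_space UNIV)"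
      "(\<lambda>\<omega>. S \<omega> b) \<in> borel_measurable M" for b
      using Suc by (auto simp: N_def S_def)
    have [measurable]: "a \<in> measurable M (count_space UNIV)" unfolding a_def by measurable
    \<comment> \<open>The reward drawn at round \<open>Suc t\<close> sits at a random index of the reward table.\<close>
    have [measurable]: "(\<lambda>\<omega>. X \<omega> (b, N \<omega> b)) \<in> borel_measurable M" for b
      by (rule measurable_compose_countable[where f = "\<lambda>i \<omega>. X \<omega> (b, i)" and g = "\<lambda>\<omega>. N \<omega> b"]) measurable
    have "fst (klms_hist K (X \<omega>) (U \<omega>) (Suc t)) b = (if a \<omega> = b then Suc (N \<omega> b) else N \<omega> b)"
      "snd (klms_hist K (X \<omega>) (U \<omega>) (Suc t)) b = (if a \<omega> = b then S \<omega> b + X \<omega> (b, N \<omega> b) else S \<omega> b)"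
      for \<omega> b
      by (simp_all add: a_def N_def S_def Let_def split: prod.splits)
    then show ?case by simp
  qed simp
  then show "(\<lambda>\<omega>. fst (klms_hist K (X \<omega>) (U \<omega>) t) b) \<in> measurable M (count_space UNIV)"
    and "(\<lambda>\<omega>. snd (klms_hist K (X \<omega>) (U \<omega>) t) b) \<in> borel_measurable M"
    by auto
qed

lemma measurable_klms_arm:
  assumes [measurable]: "\<And>p. (\<lambda>\<omega>. X \<omega> p) \<in> borel_measurable M" "\<And>s. (\<lambda>\<omega>. U \<omega> s) \<in> borel_measurable M"
  shows "(\<lambda>\<omega>. klms_arm K (X \<omega>) (U \<omega>) t) \<in> measurable M (count_space UNIV)"
proof -
  note [measurable] = measurable_klms_hist[OF assms, where K = K and t = "t - 1"]
  have arm: "klms_arm K (X \<omega>) (U \<omega>) t = klms_choose K t (fst (klms_hist K (X \<omega>) (U \<omega>) (t - 1)))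
      (snd (klms_hist K (X \<omega>) (U \<omega>) (t - 1))) (U \<omega> t)" for \<omega>
    unfolding klms_arm_def by (simp split: prod.splits)
  show ?thesis unfolding arm by measurable
qed

end

lemma nn_integral_PiM_split_coordinate:
  fixes N :: "'a measure" and t :: 'i
  assumes "prob_space N" and g: "g \<in> borel_measurable (PiM UNIV (\<lambda>_. N))"
  shows "(\<integral>\<^sup>+U. g U \<partial>PiM UNIV (\<lambda>_. N))
    = (\<integral>\<^sup>+V. (\<integral>\<^sup>+y. g (V(t := y)) \<partial>N) \<partial>PiM (UNIV - {t}) (\<lambda>_. N))"
proof -
  interpret N: prob_space N by fact
  interpret V: prob_space "PiM (UNIV - {t}) (\<lambda>_. N)" by (intro prob_space_PiM assms)
  interpret pair_sigma_finite N "PiM (UNIV - {t}) (\<lambda>_. N)" ..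
  have UNIV_eq: "insert t (UNIV - {t}) = UNIV" by auto
  have distr: "distr (N \<Otimes>\<^sub>M PiM (UNIV - {t}) (\<lambda>_. N)) (PiM UNIV (\<lambda>_. N)) (\<lambda>(y, V). V(t := y))
      = PiM UNIV (\<lambda>_. N)"
    using distr_pair_PiM_eq_PiM[of "UNIV - {t}" "\<lambda>_. N" t] assms(1) unfolding UNIV_eq by simp
  have upd: "(\<lambda>(y, V). V(t := y)) \<in> N \<Otimes>\<^sub>M PiM (UNIV - {t}) (\<lambda>_. N) \<rightarrow>\<^sub>M PiM UNIV (\<lambda>_. N)"
    unfolding case_prod_beta' by (rule measurable_fun_upd[where J = "UNIV - {t}"]) auto
  have "(\<integral>\<^sup>+U. g U \<partial>PiM UNIV (\<lambda>_. N))
      = (\<integral>\<^sup>+U. g U \<partial>distr (N \<Otimes>\<^sub>M PiM (UNIV - {t}) (\<lambda>_. N)) (PiM UNIV (\<lambda>_. N)) (\<lambda>(y, V). V(t := y)))"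
    by (simp only: distr)
  also have "\<dots> = (\<integral>\<^sup>+p. g ((\<lambda>(y, V). V(t := y)) p) \<partial>(N \<Otimes>\<^sub>M PiM (UNIV - {t}) (\<lambda>_. N)))"
    by (rule nn_integral_distr[OF upd]) (simp add: g)
  also have "\<dots> = (\<integral>\<^sup>+V. (\<integral>\<^sup>+y. g (V(t := y)) \<partial>N) \<partial>PiM (UNIV - {t}) (\<lambda>_. N))"
    using nn_integral_snd[of "\<lambda>(y, V). g (V(t := y))"] measurable_compose[OF upd g]
    by (simp add: case_prod_beta')
  finally show ?thesis .
qed

lemma nn_integral_PiM_coordinate:
  fixes N :: "'a measure" and t :: 'i and f :: "('i \<Rightarrow> 'a) \<Rightarrow> 'a \<Rightarrow> ennreal"
  assumes "prob_space N"
    and f: "(\<lambda>(U, u). f U u) \<in> borel_measurable (PiM UNIV (\<lambda>_. N) \<Otimes>\<^sub>M N)"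
    and indep: "\<And>U y. f (U(t := y)) = f U"
  shows "(\<integral>\<^sup>+U. f U (U t) \<partial>PiM UNIV (\<lambda>_. N)) = (\<integral>\<^sup>+U. (\<integral>\<^sup>+u. f U u \<partial>N) \<partial>PiM UNIV (\<lambda>_. N))"
proof -
  interpret N: prob_space N by fact
  have [measurable]: "(\<lambda>U. f U (U t)) \<in> borel_measurable (PiM UNIV (\<lambda>_. N))"
    using measurable_compose[OF measurable_Pair[OF measurable_ident_sets[OF refl]
        measurable_component_singleton[of t UNIV "\<lambda>_. N"]] f] by simp
  have [measurable]: "(\<lambda>U. \<integral>\<^sup>+u. f U u \<partial>N) \<in> borel_measurable (PiM UNIV (\<lambda>_. N))"
    using f by (intro N.borel_measurable_nn_integral) (simp add: case_prod_beta')
  show ?thesis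
    using \<open>prob_space N\<close> by (simp add: nn_integral_PiM_split_coordinate[where t = t] indep N.emeasure_space_1)
qed

lemma measurable_unif01_component [measurable]:
  "(\<lambda>U. U s) \<in> borel_measurable (PiM UNIV (\<lambda>_. unif01))"
  using measurable_component_singleton[of s UNIV "\<lambda>_. unif01"]
  by (simp add: measurable_cong_sets[OF refl sets_uniform_measure])

lemma emp_mean_klms_hist_1:
  assumes "fst (klms_hist K X U t) 1 = k"
  shows "emp_mean (fst (klms_hist K X U t)) (snd (klms_hist K X U t)) 1 = sample_mean k (\<lambda>s. X (1, s))"
  using assms by (simp add: emp_mean_def sample_mean_def snd_klms_hist)

lemma emp_mean_klms_hist_in_unit_interval:
  assumes "\<And>j. X (b, j) \<in> {0..1}"
  shows "emp_mean (fst (klms_hist K X U t)) (snd (klms_hist K X U t)) b \<in> {0..1}"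
proof -
  define n where "n = fst (klms_hist K X U t) b"
  have "0 \<le> (\<Sum>j<n. X (b, j))" "(\<Sum>j<n. X (b, j)) \<le> n"
    using assms sum_mono[of "{..<n}" "\<lambda>j. X (b, j)" "\<lambda>_. 1"] by (auto intro: sum_nonneg)
  then show ?thesis
    by (cases "n = 0") (auto simp: emp_mean_def snd_klms_hist n_def[symmetric] divide_le_eq)
qed

lemma nn_integral_klms_choose_a_le_exp_kl_below:
  fixes k r :: nat and x :: real and U :: "nat \<Rightarrow> real"
  assumes "a \<in> {2..K}" "K < t" "x < 1"
    and rewards: "\<And>b j. b \<in> {1..K} \<Longrightarrow> X (b, j) \<in> {0..1}"
  defines "N \<equiv> fst (klms_hist K X U r)" and "S \<equiv> snd (klms_hist K X U r)"
  shows "(\<integral>\<^sup>+u. of_bool (klms_choose K t N S u = a \<and> emp_max K N S < x \<and> N 1 = k) \<partial>unif01)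
    \<le> exp_kl_below k x (\<lambda>s. X (1, s)) * (\<integral>\<^sup>+u. of_bool (klms_choose K t N S u = 1 \<and> N 1 = k) \<partial>unif01)"
proof (cases "emp_max K N S < x \<and> N 1 = k")
  case True
  have means: "emp_mean N S b \<in> {0..1}" if "b \<in> {1..K}" for b
    unfolding N_def S_def using rewards that by (intro emp_mean_klms_hist_in_unit_interval) auto
  have mean_1: "emp_mean N S 1 = sample_mean k (\<lambda>s. X (1, s))"
    using True unfolding N_def S_def by (intro emp_mean_klms_hist_1) simp
  have "emp_mean N S 1 \<le> emp_max K N S"
    using assms(1) by (intro emp_mean_le_emp_max) auto
  then have "exp_kl_below k x (\<lambda>s. X (1, s)) = exp (k * kl_real (emp_mean N S 1) x)"
    unfolding exp_kl_below_def mean_1[symmetric] using True means[of 1] assms(1) by auto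
  then show ?thesis
    using True nn_integral_klms_choose_a_le[OF \<open>K < t\<close> assms(1) means \<open>x < 1\<close>, of k] by simp
next
  case False
  then have "(\<lambda>u. of_bool (klms_choose K t N S u = a \<and> emp_max K N S < x \<and> N 1 = k) :: ennreal) = (\<lambda>_. 0)"
    by auto
  then show ?thesis by simp
qed

lemma nn_integral_pull_a_le_pull_1:
  fixes k :: nat and x :: real
  assumes "a \<in> {2..K}" "K < t" "x < 1"
    and rewards: "\<And>b j. b \<in> {1..K} \<Longrightarrow> X (b, j) \<in> {0..1}"
  defines "N U \<equiv> fst (klms_hist K X U (t - 1))" and "S U \<equiv> snd (klms_hist K X U (t - 1))"
  shows "(\<integral>\<^sup>+U. of_bool (klms_arm K X U t = a \<and> emp_max K (N U) (S U) < x \<and> N U 1 = k) \<partial>PiM UNIV (\<lambda>_. unif01))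
    \<le> exp_kl_below k x (\<lambda>s. X (1, s))
       * (\<integral>\<^sup>+U. of_bool (klms_arm K X U t = 1 \<and> N U 1 = k) \<partial>PiM UNIV (\<lambda>_. unif01))"
proof -
  interpret unif01: prob_space unif01 by (rule prob_space_uniform_measure) auto
  define fa where "fa U u = (of_bool (klms_choose K t (N U) (S U) u = a \<and> emp_max K (N U) (S U) < x \<and> N U 1 = k) :: ennreal)" for U u
  define f1 where "f1 U u = (of_bool (klms_choose K t (N U) (S U) u = 1 \<and> N U 1 = k) :: ennreal)" for U u
  have arm: "klms_arm K X U t = klms_choose K t (N U) (S U) (U t)" for U
    using \<open>K < t\<close> by (cases t) (simp_all add: N_def S_def klms_arm_Suc)
  have [measurable]: "(\<lambda>p. N (fst p) b) \<in> measurable (PiM UNIV (\<lambda>_. unif01) \<Otimes>\<^sub>M unif01) (count_space UNIV)"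
    "(\<lambda>p. S (fst p) b) \<in> borel_measurable (PiM UNIV (\<lambda>_. unif01) \<Otimes>\<^sub>M unif01)" for b
    unfolding N_def S_def by (intro measurable_klms_hist; measurable)+
  have [measurable]: "snd \<in> borel_measurable (PiM UNIV (\<lambda>_. unif01) \<Otimes>\<^sub>M unif01)"
    using measurable_snd by (simp add: measurable_cong_sets[OF refl sets_uniform_measure])
  have fa_meas: "(\<lambda>(U, u). fa U u) \<in> borel_measurable (PiM UNIV (\<lambda>_. unif01) \<Otimes>\<^sub>M unif01)"
    and f1_meas: "(\<lambda>(U, u). f1 U u) \<in> borel_measurable (PiM UNIV (\<lambda>_. unif01) \<Otimes>\<^sub>M unif01)"
    unfolding fa_def f1_def case_prod_beta' by measurable
  have indep: "N (U(t := y)) = N U" "S (U(t := y)) = S U" for U y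
    unfolding N_def S_def using \<open>K < t\<close> by (auto intro!: arg_cong[where f = fst] arg_cong[where f = snd] klms_hist_cong)
  have "(\<integral>\<^sup>+U. of_bool (klms_arm K X U t = a \<and> emp_max K (N U) (S U) < x \<and> N U 1 = k) \<partial>PiM UNIV (\<lambda>_. unif01))
      = (\<integral>\<^sup>+U. (\<integral>\<^sup>+u. fa U u \<partial>unif01) \<partial>PiM UNIV (\<lambda>_. unif01))"
    unfolding arm fa_def[symmetric]
    by (rule nn_integral_PiM_coordinate[OF unif01.prob_space_axioms fa_meas]) (auto simp: fa_def indep)
  also have "\<dots> \<le> (\<integral>\<^sup>+U. exp_kl_below k x (\<lambda>s. X (1, s)) * (\<integral>\<^sup>+u. f1 U u \<partial>unif01) \<partial>PiM UNIV (\<lambda>_. unif01))"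
    unfolding fa_def f1_def N_def S_def
    by (intro nn_integral_mono nn_integral_klms_choose_a_le_exp_kl_below assms rewards)
  also have "\<dots> = exp_kl_below k x (\<lambda>s. X (1, s)) * (\<integral>\<^sup>+U. (\<integral>\<^sup>+u. f1 U u \<partial>unif01) \<partial>PiM UNIV (\<lambda>_. unif01))"
    using f1_meas by (intro nn_integral_cmult) (simp add: unif01.borel_measurable_nn_integral)
  also have "(\<integral>\<^sup>+U. (\<integral>\<^sup>+u. f1 U u \<partial>unif01) \<partial>PiM UNIV (\<lambda>_. unif01))
      = (\<integral>\<^sup>+U. of_bool (klms_arm K X U t = 1 \<and> N U 1 = k) \<partial>PiM UNIV (\<lambda>_. unif01))"
    unfolding arm f1_def[symmetric]
    by (rule nn_integral_PiM_coordinate[OF unif01.prob_space_axioms f1_meas, symmetric]) (auto simp: f1_def indep)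
  finally show ?thesis .
qed

lemma nn_integral_pulls_a_le_exp_kl_below:
  fixes k :: nat and x :: real
  assumes "a \<in> {2..K}" "x < 1" and rewards: "\<And>b j. b \<in> {1..K} \<Longrightarrow> X (b, j) \<in> {0..1}"
  defines "N U t \<equiv> fst (klms_hist K X U (t - 1))" and "S U t \<equiv> snd (klms_hist K X U (t - 1))"
  shows "(\<integral>\<^sup>+U. (\<Sum>t\<in>{K+1..T}. of_bool (klms_arm K X U t = a \<and> emp_max K (N U t) (S U t) < x \<and> N U t 1 = k))
      \<partial>PiM UNIV (\<lambda>_. unif01))
    \<le> exp_kl_below k x (\<lambda>s. X (1, s))"
proof -
  let ?P = "PiM (UNIV :: nat set) (\<lambda>_. unif01)"
  interpret P: prob_space ?P by (intro prob_space_PiM prob_space_uniform_measure) auto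
  have [measurable]: "(\<lambda>U. fst (klms_hist K X U s) b) \<in> measurable ?P (count_space UNIV)"
    "(\<lambda>U. snd (klms_hist K X U s) b) \<in> borel_measurable ?P"
    "(\<lambda>U. klms_arm K X U s) \<in> measurable ?P (count_space UNIV)" for s b
    by (intro measurable_klms_hist measurable_klms_arm; measurable)+
  have "(\<integral>\<^sup>+U. (\<Sum>t\<in>{K+1..T}. of_bool (klms_arm K X U t = a \<and> emp_max K (N U t) (S U t) < x \<and> N U t 1 = k)) \<partial>?P)
      = (\<Sum>t\<in>{K+1..T}. \<integral>\<^sup>+U. of_bool (klms_arm K X U t = a \<and> emp_max K (N U t) (S U t) < x \<and> N U t 1 = k) \<partial>?P)"
    unfolding N_def S_def by (intro nn_integral_sum) measurable
  also have "\<dots> \<le> (\<Sum>t\<in>{K+1..T}. exp_kl_below k x (\<lambda>s. X (1, s)) * \<integral>\<^sup>+U. of_bool (klms_arm K X U t = 1 \<and> N U t 1 = k) \<partial>?P)"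
    unfolding N_def S_def using assms(1,2) rewards by (intro sum_mono nn_integral_pull_a_le_pull_1) auto
  also have "\<dots> = exp_kl_below k x (\<lambda>s. X (1, s)) * \<integral>\<^sup>+U. (\<Sum>t\<in>{K+1..T}. of_bool (klms_arm K X U t = 1 \<and> N U t 1 = k)) \<partial>?P"
    unfolding N_def by (subst nn_integral_sum) (auto simp: sum_distrib_left)
  also have "\<dots> \<le> exp_kl_below k x (\<lambda>s. X (1, s)) * \<integral>\<^sup>+U. 1 \<partial>?P"
  proof -
    have le_1: "(\<Sum>t\<in>{K+1..T}. of_bool (klms_arm K X U t = 1 \<and> N U t 1 = k) :: ennreal) \<le> 1" for U
      unfolding N_def by (rule sum_pulls_at_count_le_1) auto
    have "(\<integral>\<^sup>+U. (\<Sum>t\<in>{K+1..T}. of_bool (klms_arm K X U t = 1 \<and> N U t 1 = k)) \<partial>?P) \<le> (\<integral>\<^sup>+U. 1 \<partial>?P)"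
      by (rule nn_integral_mono) (rule le_1)
    then show ?thesis by (rule mult_left_mono) simp
  qed
  finally show ?thesis by (simp add: P.emeasure_space_1)
qed

section \<open>The bandit probability space\<close>

lemma ennreal_of_bool [simp]: "ennreal (of_bool P) = of_bool P"
  by (cases P) simp_all

lemma sum_of_bool_count_window:
  fixes N :: "'a \<Rightarrow> nat" and m n :: enat
  shows "(\<Sum>t\<in>A. of_bool (C t \<and> m < N t \<and> N t \<le> n) :: ennreal)
    = (\<Sum>k. of_bool (m < k \<and> k \<le> n) * (\<Sum>t\<in>A. of_bool (C t \<and> N t = k)))"
proof -
  have "(of_bool (C t \<and> m < N t \<and> N t \<le> n) :: ennreal)
      = (\<Sum>k. of_bool (m < k \<and> k \<le> n) * of_bool (C t \<and> N t = k))" for t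
    by (subst suminf_finite[of "{N t}"]) auto
  then show ?thesis unfolding sum_distrib_left by (simp only: suminf_sum summableI)
qed

definition reward_table :: "nat \<Rightarrow> (nat \<Rightarrow> real measure) \<Rightarrow> (nat \<times> nat \<Rightarrow> real) measure" where
  "reward_table K \<nu> = PiM UNIV (\<lambda>p. if fst p \<in> {1..K} then \<nu> (fst p) else return borel 0)"

lemma bandit_space_eq: "bandit_space K \<nu> = reward_table K \<nu> \<Otimes>\<^sub>M PiM UNIV (\<lambda>_. unif01)"
  unfolding bandit_space_def reward_table_def ..

locale unit_bandit =
  fixes K :: nat and \<nu> :: "nat \<Rightarrow> real measure" and \<mu> :: "nat \<Rightarrow> real"
  assumes arms: "\<And>i. i \<in> {1..K} \<Longrightarrow> unit_reward (\<nu> i) (\<mu> i)"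
begin

definition arm_dist :: "nat \<times> nat \<Rightarrow> real measure" where
  "arm_dist p = (if fst p \<in> {1..K} then \<nu> (fst p) else return borel 0)"

lemma prob_space_arm_dist: "prob_space (arm_dist p)"
  using arms[of "fst p"] by (auto simp: arm_dist_def unit_reward_def prob_space_return)

lemma sets_arm_dist: "sets (arm_dist p) = sets borel"
  using arms[of "fst p"] by (auto simp: arm_dist_def unit_reward_def unit_reward_axioms_def)

lemma reward_table_eq: "reward_table K \<nu> = PiM UNIV arm_dist"
  unfolding reward_table_def arm_dist_def ..

lemma measurable_bandit_space_rewards [measurable]:
  "(\<lambda>\<omega>. fst \<omega> p) \<in> borel_measurable (bandit_space K \<nu>)"
  using measurable_compose[OF measurable_fst measurable_component_singleton[of p UNIV arm_dist]]
  by (simp add: bandit_space_eq reward_table_eq measurable_cong_sets[OF refl sets_arm_dist])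

lemma measurable_bandit_space_variates [measurable]:
  "(\<lambda>\<omega>. snd \<omega> s) \<in> borel_measurable (bandit_space K \<nu>)"
  using measurable_compose[OF measurable_snd measurable_component_singleton[of s UNIV "\<lambda>_. unif01"]]
  by (simp add: bandit_space_eq measurable_cong_sets[OF refl sets_uniform_measure])

lemma measurable_bandit_space_klms [measurable]:
  "(\<lambda>\<omega>. fst (klms_hist K (fst \<omega>) (snd \<omega>) s) b) \<in> measurable (bandit_space K \<nu>) (count_space UNIV)"
  "(\<lambda>\<omega>. snd (klms_hist K (fst \<omega>) (snd \<omega>) s) b) \<in> borel_measurable (bandit_space K \<nu>)"
  "(\<lambda>\<omega>. klms_arm K (fst \<omega>) (snd \<omega>) s) \<in> measurable (bandit_space K \<nu>) (count_space UNIV)"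
  by (intro measurable_klms_hist measurable_klms_arm; measurable)+

lemma AE_reward_table_unit_interval:
  "AE X in reward_table K \<nu>. \<forall>p. fst p \<in> {1..K} \<longrightarrow> X p \<in> {0..1}"
proof (subst AE_all_countable, intro allI)
  fix p :: "nat \<times> nat"
  show "AE X in reward_table K \<nu>. fst p \<in> {1..K} \<longrightarrow> X p \<in> {0..1}"
  proof (cases "fst p \<in> {1..K}")
    case True
    then have "arm_dist p = \<nu> (fst p)" by (simp add: arm_dist_def)
    moreover have "AE y in \<nu> (fst p). y \<in> {0..1}"
      using True by (rule arms[THEN unit_reward.AE_unit_interval])
    ultimately have "AE y in arm_dist p. y \<in> {0..1}" by (simp only:)
    then have "AE X in PiM UNIV arm_dist. X p \<in> {0..1}"
      by (rule AE_PiM_component[rotated 2]) (auto intro: prob_space_arm_dist)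
    then show ?thesis unfolding reward_table_eq by (rule AE_mp) simp
  next
    case False
    show ?thesis by (rule AE_I2) (use False in auto)
  qed
qed

lemma nn_integral_reward_table_arm_1:
  assumes "1 \<le> K"
  shows "(\<integral>\<^sup>+X. exp_kl_below k x (\<lambda>s. X (1, s)) \<partial>reward_table K \<nu>)
    = (\<integral>\<^sup>+\<omega>. exp_kl_below k x \<omega> \<partial>unit_reward.samples (\<nu> 1) k)"
proof -
  interpret arm1: unit_reward "\<nu> 1" "\<mu> 1" using arms assms by simp
  define restr where "restr X = (\<lambda>n\<in>{..<k}. X (1, n))" for X :: "nat \<times> nat \<Rightarrow> real"
  have samples_eq: "arm1.samples k = PiM {..<k} (\<lambda>n. arm_dist (1, n))"
    unfolding arm1.samples_def arm_dist_def using assms by (intro PiM_cong) auto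
  have restr_meas: "restr \<in> reward_table K \<nu> \<rightarrow>\<^sub>M arm1.samples k"
    unfolding samples_eq reward_table_eq restr_def
    by (intro measurable_restrict measurable_component_singleton) auto
  have distr: "distr (reward_table K \<nu>) (arm1.samples k) restr = arm1.samples k"
    unfolding samples_eq reward_table_eq restr_def
    by (rule distr_PiM_reindex) (auto intro: prob_space_arm_dist inj_onI)
  have meas: "exp_kl_below k x \<in> borel_measurable (arm1.samples k)"
    unfolding exp_kl_below_def kl_real_def by measurable
  have "exp_kl_below k x (\<lambda>s. X (1, s)) = exp_kl_below k x (restr X)" for X
    unfolding exp_kl_below_def sample_mean_def restr_def by simp
  then have "(\<integral>\<^sup>+X. exp_kl_below k x (\<lambda>s. X (1, s)) \<partial>reward_table K \<nu>)
      = (\<integral>\<^sup>+X. exp_kl_below k x (restr X) \<partial>reward_table K \<nu>)"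
    by simp
  also have "\<dots> = (\<integral>\<^sup>+\<omega>. exp_kl_below k x \<omega> \<partial>distr (reward_table K \<nu>) (arm1.samples k) restr)"
    by (rule nn_integral_distr[OF restr_meas, symmetric]) (simp only: measurable_distr_eq1 meas)
  finally show ?thesis unfolding distr .
qed

lemma nn_integral_pulls_a_at_count_le:
  fixes k :: nat and x :: real
  assumes "a \<in> {2..K}" "0 < x" "x < \<mu> 1" "0 < k"
  defines "N \<omega> t \<equiv> fst (klms_hist K (fst \<omega>) (snd \<omega>) (t - 1))"
    and "S \<omega> t \<equiv> snd (klms_hist K (fst \<omega>) (snd \<omega>) (t - 1))"
  shows "(\<integral>\<^sup>+\<omega>. (\<Sum>t\<in>{K+1..T}. of_bool (klms_arm K (fst \<omega>) (snd \<omega>) t = a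
              \<and> emp_max K (N \<omega> t) (S \<omega> t) < x \<and> N \<omega> t 1 = k)) \<partial>bandit_space K \<nu>)
    \<le> (2 * H_const (\<mu> 1) (\<mu> 1 - x) / k + 1) * exp_neg k (kl x (\<mu> 1))"
proof -
  interpret arm1: unit_reward "\<nu> 1" "\<mu> 1" using arms assms(1) by simp
  interpret U: prob_space "PiM (UNIV :: nat set) (\<lambda>_. unif01)"
    by (intro prob_space_PiM prob_space_uniform_measure) auto
  have "x < 1" using assms(3) arm1.mean_le_1 by simp
  define F where "F \<omega> = (\<Sum>t\<in>{K+1..T}. of_bool (klms_arm K (fst \<omega>) (snd \<omega>) t = a
    \<and> emp_max K (N \<omega> t) (S \<omega> t) < x \<and> N \<omega> t 1 = k) :: ennreal)" for \<omega>
  have "F \<in> borel_measurable (bandit_space K \<nu>)"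
    unfolding F_def N_def S_def by measurable
  then have "(\<integral>\<^sup>+\<omega>. F \<omega> \<partial>bandit_space K \<nu>)
      = (\<integral>\<^sup>+X. (\<integral>\<^sup>+U. F (X, U) \<partial>PiM UNIV (\<lambda>_. unif01)) \<partial>reward_table K \<nu>)"
    unfolding bandit_space_eq by (rule U.nn_integral_fst[symmetric])
  also have "\<dots> \<le> (\<integral>\<^sup>+X. exp_kl_below k x (\<lambda>s. X (1, s)) \<partial>reward_table K \<nu>)"
    using AE_reward_table_unit_interval
  proof (intro nn_integral_mono_AE, eventually_elim)
    case (elim X)
    then have "X (b, j) \<in> {0..1}" if "b \<in> {1..K}" for b j using that by auto
    then show ?case
      unfolding F_def N_def S_def fst_conv snd_conv by (rule nn_integral_pulls_a_le_exp_kl_below[OF assms(1) \<open>x < 1\<close>])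
  qed
  also have "\<dots> = (\<integral>\<^sup>+\<omega>. exp_kl_below k x \<omega> \<partial>arm1.samples k)"
    using assms(1) by (intro nn_integral_reward_table_arm_1) auto
  also have "\<dots> \<le> (2 * H_const (\<mu> 1) (\<mu> 1 - x) / k + 1) * exp_neg k (kl x (\<mu> 1))"
    using assms by (intro arm1.nn_integral_exp_kl_below_le) auto
  finally show ?thesis unfolding F_def .
qed

lemma nn_integral_pulls_a_in_count_window_le:
  fixes x :: real and m n :: enat
  assumes "a \<in> {2..K}" "0 < x" "x < \<mu> 1"
  defines "N \<omega> t \<equiv> fst (klms_hist K (fst \<omega>) (snd \<omega>) (t - 1))"
    and "S \<omega> t \<equiv> snd (klms_hist K (fst \<omega>) (snd \<omega>) (t - 1))"
  shows "(\<integral>\<^sup>+\<omega>. (\<Sum>t\<in>{K+1..T}. of_bool (klms_arm K (fst \<omega>) (snd \<omega>) t = a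
              \<and> emp_max K (N \<omega> t) (S \<omega> t) < x \<and> m < N \<omega> t 1 \<and> N \<omega> t 1 \<le> n)) \<partial>bandit_space K \<nu>)
    \<le> (\<Sum>k. ennreal (if m < k \<and> k \<le> n
          then (2 * H_const (\<mu> 1) (\<mu> 1 - x) / k + 1) * exp_neg k (kl x (\<mu> 1)) else 0))"
proof -
  define C where "C \<omega> t \<longleftrightarrow> klms_arm K (fst \<omega>) (snd \<omega>) t = a \<and> emp_max K (N \<omega> t) (S \<omega> t) < x"
    for \<omega> t
  define g where "g k \<omega> = (\<Sum>t\<in>{K+1..T}. of_bool (C \<omega> t \<and> N \<omega> t 1 = k) :: ennreal)" for k \<omega>
  have g_meas [measurable]: "g k \<in> borel_measurable (bandit_space K \<nu>)" for k
    unfolding g_def C_def N_def S_def by measurable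
  have "(\<integral>\<^sup>+\<omega>. (\<Sum>t\<in>{K+1..T}. of_bool (C \<omega> t \<and> m < N \<omega> t 1 \<and> N \<omega> t 1 \<le> n)) \<partial>bandit_space K \<nu>)
      = (\<integral>\<^sup>+\<omega>. (\<Sum>k. of_bool (m < k \<and> k \<le> n) * g k \<omega>) \<partial>bandit_space K \<nu>)"
    unfolding g_def sum_of_bool_count_window ..
  also have "\<dots> = (\<Sum>k. of_bool (m < k \<and> k \<le> n) * (\<integral>\<^sup>+\<omega>. g k \<omega> \<partial>bandit_space K \<nu>))"
    by (subst nn_integral_suminf) (simp_all add: nn_integral_cmult[OF g_meas])
  also have "\<dots> \<le> (\<Sum>k. ennreal (if m < k \<and> k \<le> n
      then (2 * H_const (\<mu> 1) (\<mu> 1 - x) / k + 1) * exp_neg k (kl x (\<mu> 1)) else 0))"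
  proof (intro suminf_le allI)
    fix k
    show "of_bool (m < k \<and> k \<le> n) * (\<integral>\<^sup>+\<omega>. g k \<omega> \<partial>bandit_space K \<nu>) \<le> ennreal (if m < k \<and> k \<le> n
      then (2 * H_const (\<mu> 1) (\<mu> 1 - x) / k + 1) * exp_neg k (kl x (\<mu> 1)) else 0)"
    proof (cases "m < k \<and> k \<le> n")
      case True
      then have "0 < k" by (cases k) (auto simp: zero_enat_def[symmetric])
      then show ?thesis
        using True nn_integral_pulls_a_at_count_le[OF assms(1-3)] by (simp add: g_def C_def N_def S_def)
    qed auto
  qed auto
  finally show ?thesis unfolding C_def by (simp only: conj_assoc)
qed

end

theorem lemma7:
  fixes K T a :: nat and \<nu> :: "nat \<Rightarrow> real measure" and \<mu> :: "nat \<Rightarrow> real"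
    and \<epsilon>\<^sub>2 :: real and m n :: enat
  assumes "K \<ge> 2"
    and "\<And>i. i \<in> {1..K} \<Longrightarrow> prob_space (\<nu> i)"
    and "\<And>i. i \<in> {1..K} \<Longrightarrow> sets (\<nu> i) = sets borel"
    and "\<And>i. i \<in> {1..K} \<Longrightarrow> (AE x in \<nu> i. x \<in> {0..1})"
    and "\<And>i. i \<in> {1..K} \<Longrightarrow> \<mu> i = (\<integral>x. x \<partial>\<nu> i)"
    and "\<And>i j. 1 \<le> i \<Longrightarrow> i \<le> j \<Longrightarrow> j \<le> K \<Longrightarrow> \<mu> j \<le> \<mu> i"
    and "a \<in> {1..K}" and "\<mu> a < \<mu> 1"
    and "0 < \<epsilon>\<^sub>2" and "\<epsilon>\<^sub>2 < \<mu> 1 - \<mu> a"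
    and "m \<le> n"
  shows "(\<integral>\<^sup>+\<omega>. (\<Sum>t\<in>{K+1..T}. ennreal (of_bool (
              klms_arm K (fst \<omega>) (snd \<omega>) t = a
            \<and> emp_max K (fst (klms_hist K (fst \<omega>) (snd \<omega>) (t - 1)))
                        (snd (klms_hist K (fst \<omega>) (snd \<omega>) (t - 1))) < \<mu> 1 - \<epsilon>\<^sub>2
            \<and> m < enat (fst (klms_hist K (fst \<omega>) (snd \<omega>) (t - 1)) 1)
            \<and> enat (fst (klms_hist K (fst \<omega>) (snd \<omega>) (t - 1)) 1) \<le> n)))
          \<partial>bandit_space K \<nu>)
       \<le> (\<Sum>k. ennreal (if m < enat k \<and> enat k \<le> n
               then (2 * H_const (\<mu> 1) \<epsilon>\<^sub>2 / real k + 1)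
                    * exp_neg (real k) (kl (\<mu> 1 - \<epsilon>\<^sub>2) (\<mu> 1))
               else 0))"
proof -
  have "unit_reward (\<nu> i) (\<mu> i)" if "i \<in> {1..K}" for i
    using assms(2-5)[OF that] by (intro unit_reward.intro unit_reward_axioms.intro)
  then interpret unit_bandit K \<nu> \<mu> by (rule unit_bandit.intro)
  have "a \<in> {2..K}" using assms(7,8) by (cases "a = 1") auto
  have "0 \<le> \<mu> a" using arms[OF assms(7)] by (rule unit_reward.mean_nonneg)
  then have "0 < \<mu> 1 - \<epsilon>\<^sub>2" "\<mu> 1 - \<epsilon>\<^sub>2 < \<mu> 1" using assms(9,10) by simp_all
  moreover have "\<mu> 1 - (\<mu> 1 - \<epsilon>\<^sub>2) = \<epsilon>\<^sub>2" by simp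
  ultimately show ?thesis
    using nn_integral_pulls_a_in_count_window_le[OF \<open>a \<in> {2..K}\<close>, where x = "\<mu> 1 - \<epsilon>\<^sub>2" and T = T and m = m and n = n]
    by (simp only:) simp
qed

end
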